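(* Let $\mathbb{K}$ be a non-Archimedean valued field and let $G$ be a discrete group. Then $G$ is normed $\mathbb{K}$-amenable if and only if $H^n_b(G, E) = 0$ for every dual normed $\mathbb{K}[G]$-module $E$ and all $n \geq 1$.
   Context: A non-Archimedean valued field is a field $\mathbb{K}$ with a map $|\cdot|_\mathbb{K}:\mathbb{K}\to\mathbb{R}_{\ge 0}$ with $|x|_\mathbb{K}=0$ iff $x=0$, $|x+y|_\mathbb{K}\le\max\{|x|_\mathbb{K},|y|_\mathbb{K}\}$, $|xy|_\mathbb{K}=|x|_\mathbb{K}|y|_\mathbb{K}$ (not assumed complete). A normed $\mathbb{K}$-vector space is a $\mathbb{K}$-vector space $E$ with a norm $\|\cdot\|$ satisfying $\|x\|=0$ iff $x=0$, the ultrametric inequality $\|x+y\|\le\max\{\|x\|,\|y\|\}$, and $\|\alpha x\|=|\alpha|_\mathbb{K}\|x\|$ (the norm need not take values in $|\mathbb{K}|_\mathbb{K}$). A normed $\mathbb{K}[G]$-module is a normed $\mathbb{K}$-vector space on which $G$ acts by linear isometries (no continuity required). For normed spaces, the topological dual $E^*$ carries the operator norm $\|T\|_{op}=\inf\{C\ge 0: |Tx|_\mathbb{K}\le C\|x\|\ \forall x\}$, and if $E$ is a normed $\mathbb{K}[G]$-module, $E^*$ is one with $(g\cdot\lambda)(x)=\lambda(g^{-1}x)$. A dual normed $\mathbb{K}[G]$-module is one isometrically $G$-isomorphic to the dual of a normed $\mathbb{K}[G]$-module. For a discrete group $G$ and normed $\mathbb{K}[G]$-module $E$, let $C^n_b(G,E)$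 be the space of bounded maps $G^{n+1}\to E$, with $G$-action $(g\cdot f)(g_0,\dots,g_n)=g\cdot f(g^{-1}g_0,\dots,g^{-1}g_n)$ and coboundary $\delta^n f(g_0,\dots,g_{n+1})=\sum_{i=0}^{n+1}(-1)^i f(g_0,\dots,\widehat{g_i},\dots,g_{n+1})$. The bounded cohomology $H^\bullet_b(G,E)$ is the cohomology of the subcomplex of $G$-invariants $C^\bullet_b(G,E)^G$. For a group $G$ (here discrete), $C_b(G,\mathbb{K})$ denotes bounded (continuous) functions $G\to\mathbb{K}$ with the sup norm, with $G$ acting by $(g\cdot f)(x)=f(g^{-1}x)$. A normed $\mathbb{K}$-mean on $G$ is a bounded linear map $m:C_b(G,\mathbb{K})\to\mathbb{K}$ with $m(\mathbbm{1}_G)=1$; it is left-invariant if $m(g\cdot f)=m(f)$ for all $g,f$. $G$ is normed $\mathbb{K}$-amenable if it admits a left-invariant normed $\mathbb{K}$-mean. *)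

theory Defs
  imports Complex_Main "HOL-Algebra.Group"
begin

definition nonarch_abs :: "('k::field \<Rightarrow> real) \<Rightarrow> bool" where
  "nonarch_abs absK \<longleftrightarrow>
     (\<forall>x. absK x \<ge> 0) \<and> (\<forall>x. absK x = 0 \<longleftrightarrow> x = 0) \<and>
     (\<forall>x y. absK (x + y) \<le> max (absK x) (absK y)) \<and>
     (\<forall>x y. absK (x * y) = absK x * absK y)"

record ('k, 'v) nspace =
  vcarrier :: "'v set"
  vzero :: "'v"
  vplus :: "'v \<Rightarrow> 'v \<Rightarrow> 'v"
  vscale :: "'k \<Rightarrow> 'v \<Rightarrow> 'v"
  vnorm :: "'v \<Rightarrow> real"

definition kvs :: "('k::field, 'v) nspace \<Rightarrow> bool" where
  "kvs E \<longleftrightarrow>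
     vzero E \<in> vcarrier E \<and>
     (\<forall>x\<in>vcarrier E. \<forall>y\<in>vcarrier E. vplus E x y \<in> vcarrier E) \<and>
     (\<forall>a. \<forall>x\<in>vcarrier E. vscale E a x \<in> vcarrier E) \<and>
     (\<forall>x\<in>vcarrier E. \<forall>y\<in>vcarrier E. \<forall>z\<in>vcarrier E.
         vplus E (vplus E x y) z = vplus E x (vplus E y z)) \<and>
     (\<forall>x\<in>vcarrier E. \<forall>y\<in>vcarrier E. vplus E x y = vplus E y x) \<and>
     (\<forall>x\<in>vcarrier E. vplus E (vzero E) x = x) \<and>
     (\<forall>x\<in>vcarrier E. \<exists>y\<in>vcarrier E. vplus E x y = vzero E) \<and>
     (\<forall>a. \<forall>x\<in>vcarrier E. \<forall>y\<in>vcarrier E.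
         vscale E a (vplus E x y) = vplus E (vscale E a x) (vscale E a y)) \<and>
     (\<forall>a b. \<forall>x\<in>vcarrier E. vscale E (a + b) x = vplus E (vscale E a x) (vscale E b x)) \<and>
     (\<forall>a b. \<forall>x\<in>vcarrier E. vscale E (a * b) x = vscale E a (vscale E b x)) \<and>
     (\<forall>x\<in>vcarrier E. vscale E 1 x = x)"

definition normed_kvs :: "('k::field \<Rightarrow> real) \<Rightarrow> ('k, 'v) nspace \<Rightarrow> bool" where
  "normed_kvs absK E \<longleftrightarrow> kvs E \<and>
     (\<forall>x\<in>vcarrier E. vnorm E x \<ge> 0) \<and>
     (\<forall>x\<in>vcarrier E. vnorm E x = 0 \<longleftrightarrow> x = vzero E) \<and>
     (\<forall>x\<in>vcarrier E. \<forall>y\<in>vcarrier E. vnorm E (vplus E x y) \<le> max (vnorm E x) (vnorm E y)) \<and>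
     (\<forall>a. \<forall>x\<in>vcarrier E. vnorm E (vscale E a x) = absK a * vnorm E x)"

definition normed_module ::
  "('k::field \<Rightarrow> real) \<Rightarrow> ('g, 'b) monoid_scheme \<Rightarrow> ('k, 'v) nspace \<Rightarrow> ('g \<Rightarrow> 'v \<Rightarrow> 'v) \<Rightarrow> bool" where
  "normed_module absK G E act \<longleftrightarrow> normed_kvs absK E \<and>
     (\<forall>g\<in>carrier G. \<forall>x\<in>vcarrier E. act g x \<in> vcarrier E) \<and>
     (\<forall>x\<in>vcarrier E. act \<one>\<^bsub>G\<^esub> x = x) \<and>
     (\<forall>g\<in>carrier G. \<forall>h\<in>carrier G. \<forall>x\<in>vcarrier E. act (g \<otimes>\<^bsub>G\<^esub> h) x = act g (act h x)) \<and>
     (\<forall>g\<in>carrier G. \<forall>x\<in>vcarrier E. \<forall>y\<in>vcarrier E. act g (vplus E x y) = vplus E (act g x) (act g y)) \<and>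
     (\<forall>g\<in>carrier G. \<forall>a. \<forall>x\<in>vcarrier E. act g (vscale E a x) = vscale E a (act g x)) \<and>
     (\<forall>g\<in>carrier G. \<forall>x\<in>vcarrier E. vnorm E (act g x) = vnorm E x)"

definition bounded_functionals :: "('k::field \<Rightarrow> real) \<Rightarrow> ('k, 'v) nspace \<Rightarrow> ('v \<Rightarrow> 'k) set" where
  "bounded_functionals absK V = {l.
     (\<forall>x\<in>vcarrier V. \<forall>y\<in>vcarrier V. l (vplus V x y) = l x + l y) \<and>
     (\<forall>a. \<forall>x\<in>vcarrier V. l (vscale V a x) = a * l x) \<and>
     (\<exists>C\<ge>0. \<forall>x\<in>vcarrier V. absK (l x) \<le> C * vnorm V x) \<and>
     (\<forall>x. x \<notin> vcarrier V \<longrightarrow> l x = 0)}"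

definition op_norm :: "('k::field \<Rightarrow> real) \<Rightarrow> ('k, 'v) nspace \<Rightarrow> ('v \<Rightarrow> 'k) \<Rightarrow> real" where
  "op_norm absK V l = Inf {C. C \<ge> 0 \<and> (\<forall>x\<in>vcarrier V. absK (l x) \<le> C * vnorm V x)}"

definition dual_space :: "('k::field \<Rightarrow> real) \<Rightarrow> ('k, 'v) nspace \<Rightarrow> ('k, 'v \<Rightarrow> 'k) nspace" where
  "dual_space absK V = \<lparr> vcarrier = bounded_functionals absK V,
     vzero = (\<lambda>x. 0),
     vplus = (\<lambda>l m x. l x + m x),
     vscale = (\<lambda>a l x. a * l x),
     vnorm = op_norm absK V \<rparr>"

definition dual_act :: "('g, 'b) monoid_scheme \<Rightarrow> ('k::field, 'v) nspace \<Rightarrow> ('g \<Rightarrow> 'v \<Rightarrow> 'v)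
     \<Rightarrow> 'g \<Rightarrow> ('v \<Rightarrow> 'k) \<Rightarrow> ('v \<Rightarrow> 'k)" where
  "dual_act G V act g l = (\<lambda>x. if x \<in> vcarrier V then l (act (inv\<^bsub>G\<^esub> g) x) else 0)"

definition iso_G_isometric ::
  "('k::field \<Rightarrow> real) \<Rightarrow> ('g, 'b) monoid_scheme \<Rightarrow> ('k, 'e) nspace \<Rightarrow> ('g \<Rightarrow> 'e \<Rightarrow> 'e)
     \<Rightarrow> ('k, 'd) nspace \<Rightarrow> ('g \<Rightarrow> 'd \<Rightarrow> 'd) \<Rightarrow> ('e \<Rightarrow> 'd) \<Rightarrow> bool" where
  "iso_G_isometric absK G E actE D actD T \<longleftrightarrow>
     bij_betw T (vcarrier E) (vcarrier D) \<and>
     (\<forall>x\<in>vcarrier E. \<forall>y\<in>vcarrier E. T (vplus E x y) = vplus D (T x) (T y)) \<and>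
     (\<forall>a. \<forall>x\<in>vcarrier E. T (vscale E a x) = vscale D a (T x)) \<and>
     (\<forall>x\<in>vcarrier E. vnorm D (T x) = vnorm E x) \<and>
     (\<forall>g\<in>carrier G. \<forall>x\<in>vcarrier E. T (actE g x) = actD g (T x))"

text \<open>E (with action actE) is a dual normed K[G]-module, witnessed by the
  normed K[G]-module V (with action actV): E is isometrically G-isomorphic to V*.\<close>

definition dual_module_of ::
  "('k::field \<Rightarrow> real) \<Rightarrow> ('g, 'b) monoid_scheme \<Rightarrow> ('k, 'e) nspace \<Rightarrow> ('g \<Rightarrow> 'e \<Rightarrow> 'e)
     \<Rightarrow> ('k, 'v) nspace \<Rightarrow> ('g \<Rightarrow> 'v \<Rightarrow> 'v) \<Rightarrow> bool" where
  "dual_module_of absK G E actE V actV \<longleftrightarrow>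
     normed_module absK G E actE \<and> normed_module absK G V actV \<and>
     (\<exists>T. iso_G_isometric absK G E actE (dual_space absK V) (dual_act G V actV) T)"

text \<open>An n-cochain is a map G^(n+1) -> E, modelled on lists of length n+1 with
  entries in the carrier of G, and extended by zero elsewhere.\<close>

definition gtuples :: "('g, 'b) monoid_scheme \<Rightarrow> nat \<Rightarrow> 'g list set" where
  "gtuples G n = {xs. length xs = Suc n \<and> set xs \<subseteq> carrier G}"

definition bcochains ::
  "('g, 'b) monoid_scheme \<Rightarrow> ('k::field, 'e) nspace \<Rightarrow> nat \<Rightarrow> ('g list \<Rightarrow> 'e) set" where
  "bcochains G E n = {f.
     (\<forall>xs\<in>gtuples G n. f xs \<in> vcarrier E) \<and>
     (\<forall>xs. xs \<notin> gtuples G n \<longrightarrow> f xs = vzero E) \<and>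
     (\<exists>C. \<forall>xs\<in>gtuples G n. vnorm E (f xs) \<le> C)}"

definition inv_bcochains ::
  "('g, 'b) monoid_scheme \<Rightarrow> ('k::field, 'e) nspace \<Rightarrow> ('g \<Rightarrow> 'e \<Rightarrow> 'e) \<Rightarrow> nat \<Rightarrow> ('g list \<Rightarrow> 'e) set" where
  "inv_bcochains G E act n = {f \<in> bcochains G E n.
     \<forall>g\<in>carrier G. \<forall>xs\<in>gtuples G n. act g (f (map (\<lambda>x. inv\<^bsub>G\<^esub> g \<otimes>\<^bsub>G\<^esub> x) xs)) = f xs}"

definition vsum_list :: "('k, 'e) nspace \<Rightarrow> 'e list \<Rightarrow> 'e" where
  "vsum_list E vs = foldr (vplus E) vs (vzero E)"

definition coboundary ::
  "('g, 'b) monoid_scheme \<Rightarrow> ('k::field, 'e) nspace \<Rightarrow> nat \<Rightarrow> ('g list \<Rightarrow> 'e) \<Rightarrow> ('g list \<Rightarrow> 'e)" where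
  "coboundary G E n f = (\<lambda>xs. if xs \<in> gtuples G (Suc n) then
     vsum_list E (map (\<lambda>i. vscale E ((-1) ^ i) (f (take i xs @ drop (Suc i) xs))) [0..<n+2])
     else vzero E)"

definition Hb_vanishes ::
  "('g, 'b) monoid_scheme \<Rightarrow> ('k::field, 'e) nspace \<Rightarrow> ('g \<Rightarrow> 'e \<Rightarrow> 'e) \<Rightarrow> nat \<Rightarrow> bool" where
  "Hb_vanishes G E act n \<longleftrightarrow>
     (\<forall>f\<in>inv_bcochains G E act n. coboundary G E n f = (\<lambda>xs. vzero E) \<longrightarrow>
        (\<exists>h\<in>inv_bcochains G E act (n - 1). coboundary G E (n - 1) h = f))"

definition Cb :: "('k::field \<Rightarrow> real) \<Rightarrow> ('g, 'b) monoid_scheme \<Rightarrow> ('g \<Rightarrow> 'k) set" where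
  "Cb absK G = {f. (\<exists>C. \<forall>x\<in>carrier G. absK (f x) \<le> C) \<and> (\<forall>x. x \<notin> carrier G \<longrightarrow> f x = 0)}"

definition sup_norm :: "('k::field \<Rightarrow> real) \<Rightarrow> ('g, 'b) monoid_scheme \<Rightarrow> ('g \<Rightarrow> 'k) \<Rightarrow> real" where
  "sup_norm absK G f = Sup ((\<lambda>x. absK (f x)) ` carrier G)"

definition indicator_G :: "('g, 'b) monoid_scheme \<Rightarrow> 'g \<Rightarrow> 'k::field" where
  "indicator_G G = (\<lambda>x. if x \<in> carrier G then 1 else 0)"

definition left_translate :: "('g, 'b) monoid_scheme \<Rightarrow> 'g \<Rightarrow> ('g \<Rightarrow> 'k::field) \<Rightarrow> ('g \<Rightarrow> 'k)" where
  "left_translate G g f = (\<lambda>x. if x \<in> carrier G then f (inv\<^bsub>G\<^esub> g \<otimes>\<^bsub>G\<^esub> x) else 0)"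

definition normed_mean :: "('k::field \<Rightarrow> real) \<Rightarrow> ('g, 'b) monoid_scheme \<Rightarrow> (('g \<Rightarrow> 'k) \<Rightarrow> 'k) \<Rightarrow> bool" where
  "normed_mean absK G m \<longleftrightarrow>
     (\<forall>f\<in>Cb absK G. \<forall>h\<in>Cb absK G. m (\<lambda>x. f x + h x) = m f + m h) \<and>
     (\<forall>a. \<forall>f\<in>Cb absK G. m (\<lambda>x. a * f x) = a * m f) \<and>
     (\<exists>C\<ge>0. \<forall>f\<in>Cb absK G. absK (m f) \<le> C * sup_norm absK G f) \<and>
     m (indicator_G G) = 1"

definition normed_amenable :: "('k::field \<Rightarrow> real) \<Rightarrow> ('g, 'b) monoid_scheme \<Rightarrow> bool" where
  "normed_amenable absK G \<longleftrightarrow> (\<exists>m. normed_mean absK G m \<and>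
     (\<forall>g\<in>carrier G. \<forall>f\<in>Cb absK G. m (left_translate G g f) = m f))"

end

theory Submission
  imports Defs
begin

(* If m is a left-invariant mean, a bounded invariant n-cocycle f with values in the dual V* of
   a normed module has the bounded invariant primitive
     h(g_1, ..., g_n)(v) = m(x |-> f(x, g_1, ..., g_n)(v)):
   the cocycle identity at (x, g_0, ..., g_n) writes f(g_0, ..., g_n) as the alternating sum of
   the f(x, g_0, ..., omit g_i, ..., g_n), and averaging it over x gives exactly the coboundary
   of h. Bounded cohomology is invariant under isometric G-isomorphisms, so this covers every
   dual module.
   Conversely, take V = l^oo(G) modulo constants. The increments c(g_0, g_1)[f] = f(g_1) - f(g_0)
   form a bounded invariant 1-cocycle with values in V*. A bounded invariant primitive h, i.e.
   h(g_1) - h(g_0) = c(g_0, g_1), yields the left-invariant mean m(f) = f(1) - h(1)[f]: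
   invariance of h turns h(1)[g f] into h(g^-1)[f], and the increment identity absorbs the
   difference. *)

locale nonarch_absolute_value =
  fixes absK :: "'k::field \<Rightarrow> real"
  assumes nonarch: "nonarch_abs absK"
begin

lemma absK_nonneg: "absK x \<ge> 0"
  using nonarch by (simp add: nonarch_abs_def)

lemma absK_eq_0_iff: "absK x = 0 \<longleftrightarrow> x = 0"
  using nonarch by (simp add: nonarch_abs_def)

lemma absK_add_le: "absK (x + y) \<le> max (absK x) (absK y)"
  using nonarch by (simp add: nonarch_abs_def)

lemma absK_mult: "absK (x * y) = absK x * absK y"
  using nonarch by (simp add: nonarch_abs_def)

lemma absK_0 [simp]: "absK 0 = 0"
  by (simp add: absK_eq_0_iff)

lemma absK_pos: "x \<noteq> 0 \<Longrightarrow> absK x > 0"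
  using absK_nonneg absK_eq_0_iff by (simp add: order_less_le)

lemma absK_1 [simp]: "absK 1 = 1"
  using absK_mult[of 1 1] absK_pos[of 1] by simp

lemma absK_minus: "absK (- x) = absK x"
proof -
  have "absK (-1) * absK (-1) = 1"
    using absK_mult[of "-1" "-1"] by simp
  then have "absK (-1) = 1"
    using absK_nonneg[of "-1"] by (metis abs_of_nonneg abs_square_eq_1 power2_eq_square)
  then show ?thesis
    using absK_mult[of "-1" x] by simp
qed

lemma absK_diff_le: "absK (x - y) \<le> max (absK x) (absK y)"
  using absK_add_le[of x "- y"] by (simp add: absK_minus)

lemma homogeneous_if_subhomogeneous:
  fixes N :: "'a \<Rightarrow> real" and scale :: "'k \<Rightarrow> 'a \<Rightarrow> 'a"
  assumes closed: "\<And>a x. x \<in> S \<Longrightarrow> scale a x \<in> S"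
    and sub: "\<And>a x. x \<in> S \<Longrightarrow> N (scale a x) \<le> absK a * N x"
    and cancel: "\<And>a x. a \<noteq> 0 \<Longrightarrow> x \<in> S \<Longrightarrow> scale (inverse a) (scale a x) = x"
    and nonneg: "\<And>x. x \<in> S \<Longrightarrow> N x \<ge> 0"
    and x: "x \<in> S"
  shows "N (scale a x) = absK a * N x"
proof (cases "a = 0")
  case True
  then show ?thesis
    using sub[OF x, of a] nonneg[OF closed[OF x, of a]] by simp
next
  case False
  have "N x \<le> absK (inverse a) * N (scale a x)"
    using sub[OF closed[OF x, of a], of "inverse a"] cancel[OF False x] by simp
  then have "absK a * N x \<le> absK a * absK (inverse a) * N (scale a x)"
    using absK_nonneg[of a] by (simp add: mult.assoc mult_left_mono)
  also have "absK a * absK (inverse a) = 1"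
    using False by (simp flip: absK_mult)
  finally show ?thesis
    using sub[OF x, of a] by simp
qed

end

lemma normed_kvs_kvs: "normed_kvs absK E \<Longrightarrow> kvs E"
  by (simp add: normed_kvs_def)

lemma
  assumes "kvs E"
  shows kvs_zero_closed: "vzero E \<in> vcarrier E"
    and kvs_add_closed: "x \<in> vcarrier E \<Longrightarrow> y \<in> vcarrier E \<Longrightarrow> vplus E x y \<in> vcarrier E"
    and kvs_scale_closed: "x \<in> vcarrier E \<Longrightarrow> vscale E a x \<in> vcarrier E"
  using assms by (simp_all add: kvs_def)

lemma kvs_zero_add_zero: "kvs E \<Longrightarrow> vplus E (vzero E) (vzero E) = vzero E"
  by (simp add: kvs_def)

lemma normed_kvs_norm_nonneg: "normed_kvs absK E \<Longrightarrow> x \<in> vcarrier E \<Longrightarrow> vnorm E x \<ge> 0"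
  by (simp add: normed_kvs_def)

lemma kvs_idem_eq_zero:
  assumes E: "kvs E" and x: "x \<in> vcarrier E" and idem: "vplus E x x = x"
  shows "x = vzero E"
proof -
  have assoc: "\<forall>x\<in>vcarrier E. \<forall>y\<in>vcarrier E. \<forall>z\<in>vcarrier E.
      vplus E (vplus E x y) z = vplus E x (vplus E y z)"
    and comm: "\<forall>x\<in>vcarrier E. \<forall>y\<in>vcarrier E. vplus E x y = vplus E y x"
    and zero: "\<forall>x\<in>vcarrier E. vplus E (vzero E) x = x"
    and neg: "\<forall>x\<in>vcarrier E. \<exists>y\<in>vcarrier E. vplus E x y = vzero E"
    using E unfolding kvs_def by blast+
  obtain y where y: "y \<in> vcarrier E" "vplus E x y = vzero E"
    using neg x by blast
  have "vzero E = vplus E (vplus E x x) y"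
    using idem y by simp
  also have "\<dots> = vplus E x (vzero E)"
    using assoc x y by (simp only:)
  also have "\<dots> = x"
    using comm zero x kvs_zero_closed[OF E] by metis
  finally show ?thesis by simp
qed

lemma vsum_list_closed: "kvs E \<Longrightarrow> set ws \<subseteq> vcarrier E \<Longrightarrow> vsum_list E ws \<in> vcarrier E"
  by (induction ws) (simp_all add: vsum_list_def kvs_zero_closed kvs_add_closed)

lemma dual_space_simps [simp]:
  "vcarrier (dual_space absK V) = bounded_functionals absK V"
  "vzero (dual_space absK V) = (\<lambda>x. 0)"
  "vplus (dual_space absK V) = (\<lambda>l m x. l x + m x)"
  "vscale (dual_space absK V) = (\<lambda>a l x. a * l x)"
  "vnorm (dual_space absK V) = op_norm absK V"
  by (simp_all add: dual_space_def)

lemma vsum_list_dual_space: "vsum_list (dual_space absK V) ls = (\<lambda>x. \<Sum>l\<leftarrow>ls. l x)"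
  by (induction ls) (simp_all add: vsum_list_def)

lemma bounded_functionalI:
  assumes "\<And>x y. x \<in> vcarrier V \<Longrightarrow> y \<in> vcarrier V \<Longrightarrow> l (vplus V x y) = l x + l y"
    and "\<And>a x. x \<in> vcarrier V \<Longrightarrow> l (vscale V a x) = a * l x"
    and "C \<ge> 0" and "\<And>x. x \<in> vcarrier V \<Longrightarrow> absK (l x) \<le> C * vnorm V x"
    and "\<And>x. x \<notin> vcarrier V \<Longrightarrow> l x = 0"
  shows "l \<in> bounded_functionals absK V"
  using assms unfolding bounded_functionals_def by blast

lemma
  assumes "l \<in> bounded_functionals absK V"
  shows bounded_functional_add_apply:
      "x \<in> vcarrier V \<Longrightarrow> y \<in> vcarrier V \<Longrightarrow> l (vplus V x y) = l x + l y"
    and bounded_functional_scale_apply: "x \<in> vcarrier V \<Longrightarrow> l (vscale V a x) = a * l x"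
    and bounded_functional_outside: "x \<notin> vcarrier V \<Longrightarrow> l x = 0"
    and bounded_functional_bounded: "\<exists>C\<ge>0. \<forall>x\<in>vcarrier V. absK (l x) \<le> C * vnorm V x"
  using assms by (simp_all add: bounded_functionals_def)

lemma bounded_functional_vzero:
  assumes "kvs V" "l \<in> bounded_functionals absK V"
  shows "l (vzero V) = 0"
proof -
  have "l (vzero V) = l (vzero V) + l (vzero V)"
    using kvs_zero_add_zero[OF assms(1)]
      bounded_functional_add_apply[OF assms(2)] kvs_zero_closed[OF assms(1)] by metis
  then show ?thesis by (metis add_cancel_left_right)
qed

context nonarch_absolute_value
begin

lemma bounded_functional_zero: "(\<lambda>x. 0) \<in> bounded_functionals absK V"
  by (rule bounded_functionalI[of _ _ 0]) simp_all

lemma bounded_functional_add: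
  assumes l: "l \<in> bounded_functionals absK V" and m: "m \<in> bounded_functionals absK V"
  shows "(\<lambda>x. l x + m x) \<in> bounded_functionals absK V"
proof -
  obtain C where C: "C \<ge> 0" "\<forall>x\<in>vcarrier V. absK (l x) \<le> C * vnorm V x"
    using bounded_functional_bounded[OF l] by blast
  obtain D where D: "D \<ge> 0" "\<forall>x\<in>vcarrier V. absK (m x) \<le> D * vnorm V x"
    using bounded_functional_bounded[OF m] by blast
  show ?thesis
  proof (rule bounded_functionalI[of _ _ "C + D"])
    fix x assume x: "x \<in> vcarrier V"
    have "absK (l x + m x) \<le> max (absK (l x)) (absK (m x))"
      by (rule absK_add_le)
    also have "\<dots> \<le> absK (l x) + absK (m x)"
      using absK_nonneg by simp
    also have "\<dots> \<le> C * vnorm V x + D * vnorm V x"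
      using C D x by (simp add: add_mono)
    finally show "absK (l x + m x) \<le> (C + D) * vnorm V x"
      by (simp add: distrib_right)
  qed (use C D in \<open>simp_all add: bounded_functional_add_apply[OF l] bounded_functional_add_apply[OF m]
      bounded_functional_scale_apply[OF l] bounded_functional_scale_apply[OF m]
      bounded_functional_outside[OF l] bounded_functional_outside[OF m] algebra_simps\<close>)
qed

lemma bounded_functional_scale:
  assumes l: "l \<in> bounded_functionals absK V"
  shows "(\<lambda>x. a * l x) \<in> bounded_functionals absK V"
proof -
  obtain C where C: "C \<ge> 0" "\<forall>x\<in>vcarrier V. absK (l x) \<le> C * vnorm V x"
    using bounded_functional_bounded[OF l] by blast
  show ?thesis
  proof (rule bounded_functionalI[of _ _ "absK a * C"])
    fix x assume "x \<in> vcarrier V"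
    then show "absK (a * l x) \<le> absK a * C * vnorm V x"
      using C absK_nonneg[of a]
      by (auto simp: absK_mult mult.assoc intro: mult_left_mono)
  qed (use C absK_nonneg[of a] in \<open>simp_all add: bounded_functional_add_apply[OF l]
      bounded_functional_scale_apply[OF l] bounded_functional_outside[OF l] algebra_simps\<close>)
qed

lemma op_norm_le:
  assumes "C \<ge> 0" "\<forall>x\<in>vcarrier V. absK (l x) \<le> C * vnorm V x"
  shows "op_norm absK V l \<le> C"
  unfolding op_norm_def by (rule cInf_lower) (use assms in \<open>auto intro: bdd_belowI[of _ 0]\<close>)

lemma op_norm_greatest:
  assumes "l \<in> bounded_functionals absK V"
    and "\<And>C. C \<ge> 0 \<Longrightarrow> \<forall>x\<in>vcarrier V. absK (l x) \<le> C * vnorm V x \<Longrightarrow> B \<le> C"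
  shows "B \<le> op_norm absK V l"
  unfolding op_norm_def by (rule cInf_greatest) (use assms in \<open>auto simp: bounded_functionals_def\<close>)

lemma op_norm_nonneg: "l \<in> bounded_functionals absK V \<Longrightarrow> op_norm absK V l \<ge> 0"
  by (rule op_norm_greatest) auto

lemma abs_le_op_norm:
  assumes V: "normed_kvs absK V" and l: "l \<in> bounded_functionals absK V" and x: "x \<in> vcarrier V"
  shows "absK (l x) \<le> op_norm absK V l * vnorm V x"
proof (cases "vnorm V x = 0")
  case True
  then have "x = vzero V"
    using V x by (simp add: normed_kvs_def)
  then show ?thesis
    using True bounded_functional_vzero[OF normed_kvs_kvs[OF V] l] by simp
next
  case False
  then have pos: "vnorm V x > 0"
    using normed_kvs_norm_nonneg[OF V x] by simp
  have "absK (l x) / vnorm V x \<le> op_norm absK V l"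
    using l x pos by (intro op_norm_greatest) (auto simp: divide_le_eq)
  then show ?thesis
    using pos by (simp add: divide_le_eq)
qed

lemma op_norm_eq_0_iff:
  assumes V: "normed_kvs absK V" and l: "l \<in> bounded_functionals absK V"
  shows "op_norm absK V l = 0 \<longleftrightarrow> l = (\<lambda>x. 0)"
proof
  assume "op_norm absK V l = 0"
  then have "l x = 0" if "x \<in> vcarrier V" for x
    using abs_le_op_norm[OF V l that] absK_nonneg[of "l x"]
    by (simp add: absK_eq_0_iff)
  then show "l = (\<lambda>x. 0)"
    using bounded_functional_outside[OF l] by blast
next
  assume "l = (\<lambda>x. 0)"
  then show "op_norm absK V l = 0"
    using op_norm_le[of 0 V l] op_norm_nonneg[OF l] by simp
qed

lemma op_norm_add_le:
  assumes V: "normed_kvs absK V"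
    and l: "l \<in> bounded_functionals absK V" and m: "m \<in> bounded_functionals absK V"
  shows "op_norm absK V (\<lambda>x. l x + m x) \<le> max (op_norm absK V l) (op_norm absK V m)"
proof (rule op_norm_le)
  show "0 \<le> max (op_norm absK V l) (op_norm absK V m)"
    using op_norm_nonneg[OF l] by simp
  show "\<forall>x\<in>vcarrier V. absK (l x + m x) \<le> max (op_norm absK V l) (op_norm absK V m) * vnorm V x"
  proof
    fix x assume x: "x \<in> vcarrier V"
    have "absK (l x + m x) \<le> max (absK (l x)) (absK (m x))"
      by (rule absK_add_le)
    also have "\<dots> \<le> max (op_norm absK V l * vnorm V x) (op_norm absK V m * vnorm V x)"
      using abs_le_op_norm[OF V l x] abs_le_op_norm[OF V m x] by (rule max.mono)
    also have "\<dots> = max (op_norm absK V l) (op_norm absK V m) * vnorm V x"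
      using normed_kvs_norm_nonneg[OF V x] by (simp add: max_mult_distrib_right)
    finally show "absK (l x + m x) \<le> max (op_norm absK V l) (op_norm absK V m) * vnorm V x" .
  qed
qed

lemma op_norm_scale:
  assumes V: "normed_kvs absK V" and l: "l \<in> bounded_functionals absK V"
  shows "op_norm absK V (\<lambda>x. a * l x) = absK a * op_norm absK V l"
proof (rule homogeneous_if_subhomogeneous[where S = "bounded_functionals absK V"])
  fix a and l assume l: "l \<in> bounded_functionals absK V"
  show "op_norm absK V (\<lambda>x. a * l x) \<le> absK a * op_norm absK V l"
    using abs_le_op_norm[OF V l] op_norm_nonneg[OF l] absK_nonneg[of a]
    by (intro op_norm_le) (auto simp: absK_mult mult.assoc intro: mult_left_mono)
qed (use l in \<open>auto simp: bounded_functional_scale op_norm_nonneg\<close>)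

lemma normed_kvs_dual_space:
  assumes V: "normed_kvs absK V"
  shows "normed_kvs absK (dual_space absK V)"
proof -
  have "\<exists>m\<in>bounded_functionals absK V. (\<lambda>x. l x + m x) = (\<lambda>x. 0)"
    if "l \<in> bounded_functionals absK V" for l
    using bounded_functional_scale[OF that, of "- 1"] by (intro bexI[of _ "\<lambda>x. - l x"]) auto
  then have "kvs (dual_space absK V)"
    unfolding kvs_def dual_space_simps
    by (simp add: bounded_functional_zero bounded_functional_add bounded_functional_scale
        algebra_simps)
  then show ?thesis
    by (simp add: normed_kvs_def op_norm_nonneg op_norm_eq_0_iff[OF V] op_norm_add_le[OF V]
        op_norm_scale[OF V])
qed

end

lemma
  assumes "normed_module absK G E act"
  shows normed_module_normed_kvs: "normed_kvs absK E"
    and normed_module_act_closed: "g \<in> carrier G \<Longrightarrow> x \<in> vcarrier E \<Longrightarrow> act g x \<in> vcarrier E"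
    and normed_module_act_one: "x \<in> vcarrier E \<Longrightarrow> act \<one>\<^bsub>G\<^esub> x = x"
    and normed_module_act_mult: "g \<in> carrier G \<Longrightarrow> h \<in> carrier G \<Longrightarrow> x \<in> vcarrier E \<Longrightarrow>
      act (g \<otimes>\<^bsub>G\<^esub> h) x = act g (act h x)"
    and normed_module_act_add: "g \<in> carrier G \<Longrightarrow> x \<in> vcarrier E \<Longrightarrow> y \<in> vcarrier E \<Longrightarrow>
      act g (vplus E x y) = vplus E (act g x) (act g y)"
    and normed_module_act_scale: "g \<in> carrier G \<Longrightarrow> x \<in> vcarrier E \<Longrightarrow>
      act g (vscale E a x) = vscale E a (act g x)"
    and normed_module_act_norm: "g \<in> carrier G \<Longrightarrow> x \<in> vcarrier E \<Longrightarrow> vnorm E (act g x) = vnorm E x"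
  using assms by (simp_all add: normed_module_def)

lemma normed_module_kvs: "normed_module absK G E act \<Longrightarrow> kvs E"
  by (rule normed_kvs_kvs[OF normed_module_normed_kvs])

locale nonarch_group = group G + nonarch_absolute_value absK
  for G :: "('g, 'b) monoid_scheme" (structure) and absK :: "'k::field \<Rightarrow> real"
begin

lemma dual_act_bounded_functional:
  assumes V: "normed_module absK G V act" and g: "g \<in> carrier G"
    and l: "l \<in> bounded_functionals absK V"
  shows "dual_act G V act g l \<in> bounded_functionals absK V"
proof -
  obtain C where C: "C \<ge> 0" "\<forall>x\<in>vcarrier V. absK (l x) \<le> C * vnorm V x"
    using bounded_functional_bounded[OF l] by blast
  have inv_g: "inv g \<in> carrier G"
    using g by simp
  note closed = normed_module_act_closed[OF V inv_g]
  show ?thesis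
    unfolding dual_act_def
  proof (rule bounded_functionalI[of _ _ C])
    fix x assume "x \<in> vcarrier V"
    then show "absK (if x \<in> vcarrier V then l (act (inv g) x) else 0) \<le> C * vnorm V x"
      using C closed normed_module_act_norm[OF V inv_g] by force
  qed (use C closed kvs_add_closed[OF normed_module_kvs[OF V]] kvs_scale_closed[OF normed_module_kvs[OF V]]
      in \<open>simp_all add: normed_module_act_add[OF V inv_g] normed_module_act_scale[OF V inv_g]
      bounded_functional_add_apply[OF l] bounded_functional_scale_apply[OF l]\<close>)
qed

lemma dual_act_one:
  "normed_module absK G V act \<Longrightarrow> l \<in> bounded_functionals absK V \<Longrightarrow> dual_act G V act \<one> l = l"
  by (auto simp: dual_act_def fun_eq_iff normed_module_act_one bounded_functional_outside)

lemma dual_act_mult: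
  assumes V: "normed_module absK G V act" and g: "g \<in> carrier G" and h: "h \<in> carrier G"
  shows "dual_act G V act (g \<otimes> h) l = dual_act G V act g (dual_act G V act h l)"
  using g h by (auto simp: dual_act_def fun_eq_iff inv_mult_group normed_module_act_mult[OF V]
      normed_module_act_closed[OF V])

lemma op_norm_dual_act:
  assumes V: "normed_module absK G V act" and g: "g \<in> carrier G"
    and l: "l \<in> bounded_functionals absK V"
  shows "op_norm absK V (dual_act G V act g l) = op_norm absK V l"
proof -
  have le: "op_norm absK V (dual_act G V act g l) \<le> op_norm absK V l"
    if g: "g \<in> carrier G" and l: "l \<in> bounded_functionals absK V" for g l
  proof (rule op_norm_le[OF op_norm_nonneg[OF l]], intro ballI)
    fix x assume x: "x \<in> vcarrier V"
    have "absK (l (act (inv g) x)) \<le> op_norm absK V l * vnorm V (act (inv g) x)"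
      using abs_le_op_norm[OF normed_module_normed_kvs[OF V] l] normed_module_act_closed[OF V] g x
      by simp
    then show "absK (dual_act G V act g l x) \<le> op_norm absK V l * vnorm V x"
      using normed_module_act_norm[OF V] g x by (simp add: dual_act_def)
  qed
  have "dual_act G V act (inv g) (dual_act G V act g l) = l"
    using dual_act_mult[OF V, of "inv g" g l] dual_act_one[OF V l] g by simp
  then have "op_norm absK V l \<le> op_norm absK V (dual_act G V act g l)"
    using le[of "inv g" "dual_act G V act g l"] dual_act_bounded_functional[OF V g l] g by simp
  then show ?thesis
    using le[OF g l] by simp
qed

lemma normed_module_dual:
  assumes V: "normed_module absK G V act"
  shows "normed_module absK G (dual_space absK V) (dual_act G V act)"
  unfolding normed_module_def
proof (intro conjI ballI allI)
  show "normed_kvs absK (dual_space absK V)"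
    by (rule normed_kvs_dual_space[OF normed_module_normed_kvs[OF V]])
qed (auto simp: dual_act_bounded_functional[OF V] dual_act_one[OF V] dual_act_mult[OF V]
    op_norm_dual_act[OF V], auto simp: dual_act_def fun_eq_iff algebra_simps)

end

lemma gtuples_Cons: "x \<in> carrier G \<Longrightarrow> ys \<in> gtuples G n \<Longrightarrow> x # ys \<in> gtuples G (Suc n)"
  by (simp add: gtuples_def)

lemma gtuples_delete:
  assumes "xs \<in> gtuples G (Suc n)" "i < n + 2"
  shows "take i xs @ drop (Suc i) xs \<in> gtuples G n"
  using assms set_take_subset[of i xs] set_drop_subset[of "Suc i" xs]
  by (auto simp: gtuples_def min_def)

lemma coboundary_dual_space_apply:
  assumes "xs \<in> gtuples G (Suc n)"
  shows "coboundary G (dual_space absK V) n f xs v =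
    (\<Sum>i<n + 2. (- 1) ^ i * f (take i xs @ drop (Suc i) xs) v)"
  using assms by (simp del: upt_Suc add: coboundary_def vsum_list_dual_space comp_def
      interv_sum_list_conv_sum_set_nat atLeast0LessThan)

lemma
  assumes "iso_G_isometric absK G E actE D actD T"
  shows iso_G_isometric_bij: "bij_betw T (vcarrier E) (vcarrier D)"
    and iso_G_isometric_add: "x \<in> vcarrier E \<Longrightarrow> y \<in> vcarrier E \<Longrightarrow>
      T (vplus E x y) = vplus D (T x) (T y)"
    and iso_G_isometric_scale: "x \<in> vcarrier E \<Longrightarrow> T (vscale E a x) = vscale D a (T x)"
    and iso_G_isometric_norm: "x \<in> vcarrier E \<Longrightarrow> vnorm D (T x) = vnorm E x"
    and iso_G_isometric_act: "g \<in> carrier G \<Longrightarrow> x \<in> vcarrier E \<Longrightarrow> T (actE g x) = actD g (T x)"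
  using assms by (simp_all add: iso_G_isometric_def)

lemma iso_G_isometric_closed:
  "iso_G_isometric absK G E actE D actD T \<Longrightarrow> x \<in> vcarrier E \<Longrightarrow> T x \<in> vcarrier D"
  using iso_G_isometric_bij bij_betwE by blast

lemma iso_G_isometric_zero:
  assumes T: "iso_G_isometric absK G E actE D actD T" and E: "kvs E" and D: "kvs D"
  shows "T (vzero E) = vzero D"
proof (rule kvs_idem_eq_zero[OF D])
  show "vplus D (T (vzero E)) (T (vzero E)) = T (vzero E)"
    using kvs_zero_add_zero[OF E] iso_G_isometric_add[OF T] kvs_zero_closed[OF E] by metis
qed (use iso_G_isometric_closed[OF T] kvs_zero_closed[OF E] in simp)

lemma iso_G_isometric_vsum_list:
  assumes T: "iso_G_isometric absK G E actE D actD T" and E: "kvs E" and D: "kvs D"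
  shows "set ws \<subseteq> vcarrier E \<Longrightarrow> T (vsum_list E ws) = vsum_list D (map T ws)"
  by (induction ws) (simp_all add: vsum_list_def iso_G_isometric_zero[OF T E D]
      iso_G_isometric_add[OF T] vsum_list_closed[OF E, unfolded vsum_list_def])

lemma iso_G_isometric_inv_into:
  assumes T: "iso_G_isometric absK G E actE D actD T"
    and E: "normed_module absK G E actE" and D: "normed_module absK G D actD"
  shows "iso_G_isometric absK G D actD E actE (inv_into (vcarrier E) T)"
proof -
  let ?S = "inv_into (vcarrier E) T"
  have bij: "bij_betw T (vcarrier E) (vcarrier D)"
    by (rule iso_G_isometric_bij[OF T])
  have S_closed: "?S y \<in> vcarrier E" and T_S: "T (?S y) = y" if "y \<in> vcarrier D" for y
    using that bij by (auto simp: bij_betw_inv_into_right bij_betw_def inv_into_into)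
  have S_eqI: "?S y = x" if "x \<in> vcarrier E" "T x = y" for x y
    using that bij bij_betw_inv_into_left by metis
  show ?thesis
    unfolding iso_G_isometric_def
  proof (intro conjI ballI allI)
    show "bij_betw ?S (vcarrier D) (vcarrier E)"
      by (rule bij_betw_inv_into[OF bij])
  next
    fix x y assume "x \<in> vcarrier D" "y \<in> vcarrier D"
    then show "?S (vplus D x y) = vplus E (?S x) (?S y)"
      using S_closed T_S kvs_add_closed[OF normed_module_kvs[OF E]] iso_G_isometric_add[OF T]
      by (intro S_eqI) auto
  next
    fix a x assume "x \<in> vcarrier D"
    then show "?S (vscale D a x) = vscale E a (?S x)"
      using S_closed T_S kvs_scale_closed[OF normed_module_kvs[OF E]] iso_G_isometric_scale[OF T]
      by (intro S_eqI) auto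
  next
    fix x assume "x \<in> vcarrier D"
    then show "vnorm E (?S x) = vnorm D x"
      using S_closed T_S iso_G_isometric_norm[OF T] by metis
  next
    fix g x assume "g \<in> carrier G" "x \<in> vcarrier D"
    then show "?S (actD g x) = actE g (?S x)"
      using S_closed T_S normed_module_act_closed[OF E] iso_G_isometric_act[OF T]
      by (intro S_eqI) auto
  qed
qed

lemma coboundary_iso:
  assumes T: "iso_G_isometric absK G E actE D actD T" and E: "kvs E" and D: "kvs D"
    and f: "f \<in> bcochains G E n"
  shows "coboundary G D n (T \<circ> f) = T \<circ> coboundary G E n f"
proof
  fix xs
  have "T (vsum_list E (map (\<lambda>i. vscale E ((- 1) ^ i) (f (take i xs @ drop (Suc i) xs))) [0..<n + 2]))
    = vsum_list D (map (\<lambda>i. vscale D ((- 1) ^ i) (T (f (take i xs @ drop (Suc i) xs)))) [0..<n + 2])"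
    if xs: "xs \<in> gtuples G (Suc n)"
  proof -
    have in_E: "f (take i xs @ drop (Suc i) xs) \<in> vcarrier E" if "i < n + 2" for i
      using f gtuples_delete[OF xs that] by (simp add: bcochains_def)
    then show ?thesis
      by (simp del: upt_Suc add: iso_G_isometric_vsum_list[OF T E D] kvs_scale_closed[OF E]
          image_subset_iff)
        (intro arg_cong[where f = "vsum_list D"] map_cong;
          simp del: upt_Suc add: iso_G_isometric_scale[OF T] in_E)
  qed
  then show "coboundary G D n (T \<circ> f) xs = (T \<circ> coboundary G E n f) xs"
    by (simp add: coboundary_def iso_G_isometric_zero[OF T E D])
qed

context nonarch_group
begin

lemma gtuples_translate:
  "g \<in> carrier G \<Longrightarrow> xs \<in> gtuples G n \<Longrightarrow> map (\<lambda>x. inv g \<otimes> x) xs \<in> gtuples G n"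
  by (auto simp: gtuples_def)

lemma inv_bcochains_iso:
  assumes T: "iso_G_isometric absK G E actE D actD T"
    and E: "normed_module absK G E actE" and D: "normed_module absK G D actD"
    and f: "f \<in> inv_bcochains G E actE n"
  shows "T \<circ> f \<in> inv_bcochains G D actD n"
proof -
  have in_E: "f xs \<in> vcarrier E" if "xs \<in> gtuples G n" for xs
    using f that by (simp add: inv_bcochains_def bcochains_def)
  obtain C where "\<forall>xs\<in>gtuples G n. vnorm E (f xs) \<le> C"
    using f by (auto simp: inv_bcochains_def bcochains_def)
  then have "\<forall>xs\<in>gtuples G n. vnorm D (T (f xs)) \<le> C"
    using iso_G_isometric_norm[OF T] in_E by simp
  moreover have "actD g (T (f (map (\<lambda>x. inv g \<otimes> x) xs))) = T (f xs)"
    if "g \<in> carrier G" "xs \<in> gtuples G n" for g xs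
    using f that in_E gtuples_translate
    by (simp add: inv_bcochains_def flip: iso_G_isometric_act[OF T])
  ultimately show ?thesis
    using f in_E iso_G_isometric_closed[OF T]
      iso_G_isometric_zero[OF T normed_module_kvs[OF E] normed_module_kvs[OF D]]
    by (auto simp: inv_bcochains_def bcochains_def)
qed

lemma Hb_vanishes_iso:
  assumes T: "iso_G_isometric absK G E actE D actD T"
    and E: "normed_module absK G E actE" and D: "normed_module absK G D actD"
    and vanishes: "Hb_vanishes G D actD n"
  shows "Hb_vanishes G E actE n"
  unfolding Hb_vanishes_def
proof (intro ballI impI)
  let ?S = "inv_into (vcarrier E) T"
  have S: "iso_G_isometric absK G D actD E actE ?S"
    by (rule iso_G_isometric_inv_into[OF T E D])
  note kvs = normed_module_kvs[OF E] normed_module_kvs[OF D]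
  fix f assume f: "f \<in> inv_bcochains G E actE n" and cocycle: "coboundary G E n f = (\<lambda>xs. vzero E)"
  have "T \<circ> f \<in> inv_bcochains G D actD n"
    by (rule inv_bcochains_iso[OF T E D f])
  moreover have "coboundary G D n (T \<circ> f) = T \<circ> coboundary G E n f"
    using f by (simp add: coboundary_iso[OF T kvs] inv_bcochains_def)
  then have "coboundary G D n (T \<circ> f) = (\<lambda>xs. vzero D)"
    using cocycle by (simp add: comp_def iso_G_isometric_zero[OF T kvs])
  ultimately obtain h where h: "h \<in> inv_bcochains G D actD (n - 1)"
    and h_cob: "coboundary G D (n - 1) h = T \<circ> f"
    using vanishes by (auto simp: Hb_vanishes_def)
  have "f xs \<in> vcarrier E" for xs
    using f kvs_zero_closed[OF kvs(1)]
    by (cases "xs \<in> gtuples G n") (auto simp: inv_bcochains_def bcochains_def)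
  then have "?S \<circ> (T \<circ> f) = f"
    using bij_betw_inv_into_left[OF iso_G_isometric_bij[OF T]] by (simp add: fun_eq_iff)
  then have "coboundary G E (n - 1) (?S \<circ> h) = f"
    using h h_cob by (simp add: coboundary_iso[OF S kvs(2,1)] inv_bcochains_def)
  then show "\<exists>h\<in>inv_bcochains G E actE (n - 1). coboundary G E (n - 1) h = f"
    using inv_bcochains_iso[OF S D E h] by blast
qed

end

context nonarch_group
begin

lemma Cb_zero: "(\<lambda>x. 0) \<in> Cb absK G"
  by (auto simp: Cb_def)

lemma Cb_add:
  assumes "f \<in> Cb absK G" "h \<in> Cb absK G"
  shows "(\<lambda>x. f x + h x) \<in> Cb absK G"
proof -
  obtain C D where "\<forall>x\<in>carrier G. absK (f x) \<le> C" "\<forall>x\<in>carrier G. absK (h x) \<le> D"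
    using assms by (auto simp: Cb_def)
  then have "\<forall>x\<in>carrier G. absK (f x + h x) \<le> max C D"
    using absK_add_le by (meson max.mono order_trans)
  then show ?thesis
    using assms by (auto simp: Cb_def)
qed

lemma Cb_scale: "f \<in> Cb absK G \<Longrightarrow> (\<lambda>x. a * f x) \<in> Cb absK G"
  unfolding Cb_def using absK_nonneg[of a] by (auto simp: absK_mult intro: mult_left_mono)

lemma Cb_sum: "finite I \<Longrightarrow> (\<And>i. i \<in> I \<Longrightarrow> F i \<in> Cb absK G) \<Longrightarrow> (\<lambda>x. \<Sum>i\<in>I. F i x) \<in> Cb absK G"
  by (induction I rule: finite_induct) (simp_all add: Cb_add Cb_zero)

lemma Cb_left_translate: "g \<in> carrier G \<Longrightarrow> f \<in> Cb absK G \<Longrightarrow> left_translate G g f \<in> Cb absK G"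
  unfolding Cb_def left_translate_def by force

lemma indicator_G_Cb: "indicator_G G \<in> Cb absK G"
  by (auto simp: Cb_def indicator_G_def intro!: exI[of _ 1])

lemma sup_norm_le: "(\<And>x. x \<in> carrier G \<Longrightarrow> absK (f x) \<le> B) \<Longrightarrow> sup_norm absK G f \<le> B"
  unfolding sup_norm_def by (rule cSup_least) auto

lemma abs_le_sup_norm:
  assumes "f \<in> Cb absK G" "x \<in> carrier G"
  shows "absK (f x) \<le> sup_norm absK G f"
proof -
  obtain C where "\<forall>x\<in>carrier G. absK (f x) \<le> C"
    using assms(1) by (auto simp: Cb_def)
  then show ?thesis
    unfolding sup_norm_def by (intro cSup_upper bdd_aboveI[of _ C]) (use assms(2) in auto)
qed

lemma sup_norm_nonneg: "f \<in> Cb absK G \<Longrightarrow> sup_norm absK G f \<ge> 0"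
  using abs_le_sup_norm[OF _ one_closed] absK_nonneg order_trans by blast

context
  fixes m
  assumes mean: "normed_mean absK G m"
begin

lemma mean_add: "f \<in> Cb absK G \<Longrightarrow> h \<in> Cb absK G \<Longrightarrow> m (\<lambda>x. f x + h x) = m f + m h"
  using mean by (simp add: normed_mean_def)

lemma mean_scale: "f \<in> Cb absK G \<Longrightarrow> m (\<lambda>x. a * f x) = a * m f"
  using mean by (simp add: normed_mean_def)

lemma mean_bounded: "\<exists>C\<ge>0. \<forall>f\<in>Cb absK G. absK (m f) \<le> C * sup_norm absK G f"
  using mean by (simp add: normed_mean_def)

lemma mean_const: "m (\<lambda>x. if x \<in> carrier G then c else 0) = c"
proof -
  have "(\<lambda>x. if x \<in> carrier G then c else 0) = (\<lambda>x. c * indicator_G G x)"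
    by (auto simp: indicator_G_def)
  then show ?thesis
    using mean_scale[OF indicator_G_Cb, of c] mean by (simp add: normed_mean_def)
qed

lemma mean_sum:
  "finite I \<Longrightarrow> (\<And>i. i \<in> I \<Longrightarrow> F i \<in> Cb absK G) \<Longrightarrow> m (\<lambda>x. \<Sum>i\<in>I. F i x) = (\<Sum>i\<in>I. m (F i))"
proof (induction I rule: finite_induct)
  case empty
  then show ?case
    using mean_const[of 0] by (simp add: if_distrib[of "\<lambda>_. 0"] cong: if_cong)
next
  case (insert i I)
  then show ?case
    by (simp add: mean_add Cb_sum)
qed

end

end

section \<open>Amenable groups have vanishing bounded cohomology\<close>

definition slice :: "('g, 'b) monoid_scheme \<Rightarrow> ('g list \<Rightarrow> 'v \<Rightarrow> 'k::zero) \<Rightarrow> 'g list \<Rightarrow> 'v \<Rightarrow> 'g \<Rightarrow> 'k"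
  where "slice G f ys v = (\<lambda>x. if x \<in> carrier G then f (x # ys) v else 0)"

definition mean_contraction ::
  "('g, 'b) monoid_scheme \<Rightarrow> ('k, 'v) nspace \<Rightarrow> (('g \<Rightarrow> 'k) \<Rightarrow> 'k) \<Rightarrow> nat \<Rightarrow>
    ('g list \<Rightarrow> 'v \<Rightarrow> 'k::zero) \<Rightarrow> 'g list \<Rightarrow> 'v \<Rightarrow> 'k"
  where "mean_contraction G V m n f ys =
    (\<lambda>v. if ys \<in> gtuples G n \<and> v \<in> vcarrier V then m (slice G f ys v) else 0)"

context nonarch_group
begin

context
  fixes V :: "('k, 'v) nspace" and actV and m and f and k
  assumes V: "normed_module absK G V actV"
    and mean: "normed_mean absK G m"
    and f: "f \<in> bcochains G (dual_space absK V) (Suc k)"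
begin

lemma cochain_value: "xs \<in> gtuples G (Suc k) \<Longrightarrow> f xs \<in> bounded_functionals absK V"
  using f by (simp add: bcochains_def)

lemma cochain_op_norm_bound: "\<exists>B\<ge>0. \<forall>xs\<in>gtuples G (Suc k). op_norm absK V (f xs) \<le> B"
proof -
  obtain B where "\<forall>xs\<in>gtuples G (Suc k). op_norm absK V (f xs) \<le> B"
    using f by (auto simp: bcochains_def)
  then show ?thesis
    by (intro exI[of _ "max B 0"]) auto
qed

lemma abs_slice_le:
  assumes B: "\<forall>xs\<in>gtuples G (Suc k). op_norm absK V (f xs) \<le> B"
    and ys: "ys \<in> gtuples G k" and v: "v \<in> vcarrier V" and x: "x \<in> carrier G"
  shows "absK (slice G f ys v x) \<le> B * vnorm V v"
proof -
  have xys: "x # ys \<in> gtuples G (Suc k)"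
    by (rule gtuples_Cons[OF x ys])
  have "absK (f (x # ys) v) \<le> op_norm absK V (f (x # ys)) * vnorm V v"
    by (rule abs_le_op_norm[OF normed_module_normed_kvs[OF V] cochain_value[OF xys] v])
  also have "\<dots> \<le> B * vnorm V v"
    using B xys normed_kvs_norm_nonneg[OF normed_module_normed_kvs[OF V] v] by (simp add: mult_right_mono)
  finally show ?thesis
    using x by (simp add: slice_def)
qed

lemma slice_Cb:
  assumes "ys \<in> gtuples G k" "v \<in> vcarrier V"
  shows "slice G f ys v \<in> Cb absK G"
proof -
  obtain B where "\<forall>xs\<in>gtuples G (Suc k). op_norm absK V (f xs) \<le> B"
    using cochain_op_norm_bound by blast
  then have "\<forall>x\<in>carrier G. absK (slice G f ys v x) \<le> B * vnorm V v"
    using abs_slice_le assms by blast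
  then show ?thesis
    unfolding Cb_def by (auto simp: slice_def)
qed

lemma mean_contraction_bounded:
  "\<exists>C\<ge>0. \<forall>ys\<in>gtuples G k. \<forall>v\<in>vcarrier V. absK (mean_contraction G V m k f ys v) \<le> C * vnorm V v"
proof -
  obtain B where B: "B \<ge> 0" "\<forall>xs\<in>gtuples G (Suc k). op_norm absK V (f xs) \<le> B"
    using cochain_op_norm_bound by blast
  obtain C where C: "C \<ge> 0" "\<forall>\<phi>\<in>Cb absK G. absK (m \<phi>) \<le> C * sup_norm absK G \<phi>"
    using mean_bounded[OF mean] by blast
  have "absK (m (slice G f ys v)) \<le> C * B * vnorm V v"
    if ys: "ys \<in> gtuples G k" and v: "v \<in> vcarrier V" for ys v
  proof -
    have "absK (m (slice G f ys v)) \<le> C * sup_norm absK G (slice G f ys v)"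
      using C slice_Cb[OF ys v] by blast
    also have "\<dots> \<le> C * (B * vnorm V v)"
      using sup_norm_le abs_slice_le[OF B(2) ys v] C(1) by (simp add: mult_left_mono)
    finally show ?thesis
      by (simp add: mult.assoc)
  qed
  then show ?thesis
    using B C by (intro exI[of _ "C * B"]) (simp add: mean_contraction_def)
qed

lemma mean_contraction_bounded_functional:
  assumes ys: "ys \<in> gtuples G k"
  shows "mean_contraction G V m k f ys \<in> bounded_functionals absK V"
proof -
  obtain C where C: "C \<ge> 0"
    "\<forall>ys\<in>gtuples G k. \<forall>v\<in>vcarrier V. absK (mean_contraction G V m k f ys v) \<le> C * vnorm V v"
    using mean_contraction_bounded by blast
  note kvs = normed_module_kvs[OF V]
  note linear = bounded_functional_add_apply[OF cochain_value[OF gtuples_Cons[OF _ ys]]]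
    bounded_functional_scale_apply[OF cochain_value[OF gtuples_Cons[OF _ ys]]]
  show ?thesis
  proof (rule bounded_functionalI[of _ _ C])
    fix v w assume v: "v \<in> vcarrier V" and w: "w \<in> vcarrier V"
    have "slice G f ys (vplus V v w) = (\<lambda>x. slice G f ys v x + slice G f ys w x)"
      using linear v w by (auto simp: slice_def)
    then show "mean_contraction G V m k f ys (vplus V v w) =
        mean_contraction G V m k f ys v + mean_contraction G V m k f ys w"
      using ys v w kvs_add_closed[OF kvs v w] mean_add[OF mean slice_Cb slice_Cb]
      by (simp add: mean_contraction_def)
  next
    fix a v assume v: "v \<in> vcarrier V"
    have "slice G f ys (vscale V a v) = (\<lambda>x. a * slice G f ys v x)"
      using linear v by (auto simp: slice_def)
    then show "mean_contraction G V m k f ys (vscale V a v) = a * mean_contraction G V m k f ys v"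
      using ys v kvs_scale_closed[OF kvs v] mean_scale[OF mean slice_Cb]
      by (simp add: mean_contraction_def)
  qed (use C ys in \<open>simp_all add: mean_contraction_def\<close>)
qed

lemma mean_contraction_bcochains: "mean_contraction G V m k f \<in> bcochains G (dual_space absK V) k"
proof -
  obtain C where C: "C \<ge> 0"
    "\<forall>ys\<in>gtuples G k. \<forall>v\<in>vcarrier V. absK (mean_contraction G V m k f ys v) \<le> C * vnorm V v"
    using mean_contraction_bounded by blast
  then have "\<forall>ys\<in>gtuples G k. op_norm absK V (mean_contraction G V m k f ys) \<le> C"
    by (auto intro: op_norm_le)
  then show ?thesis
    by (auto simp: bcochains_def mean_contraction_bounded_functional)
      (auto simp: mean_contraction_def fun_eq_iff)
qed

lemma cocycle_cone_identity:
  assumes cocycle: "coboundary G (dual_space absK V) (Suc k) f = (\<lambda>xs. vzero (dual_space absK V))"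
    and xs: "xs \<in> gtuples G (Suc k)" and x: "x \<in> carrier G"
  shows "f xs v = (\<Sum>i<k + 2. (- 1) ^ i * f (x # (take i xs @ drop (Suc i) xs)) v)"
proof -
  have "0 = coboundary G (dual_space absK V) (Suc k) f (x # xs) v"
    using cocycle by simp
  also have "\<dots> = (\<Sum>i<Suc (k + 2). (- 1) ^ i * f (take i (x # xs) @ drop (Suc i) (x # xs)) v)"
    using coboundary_dual_space_apply[OF gtuples_Cons[OF x xs]] by simp
  also have "\<dots> = f xs v - (\<Sum>i<k + 2. (- 1) ^ i * f (x # (take i xs @ drop (Suc i) xs)) v)"
    by (simp only: sum.lessThan_Suc_shift) (simp add: sum_negf)
  finally show ?thesis
    by simp
qed

lemma coboundary_mean_contraction:
  assumes cocycle: "coboundary G (dual_space absK V) (Suc k) f = (\<lambda>xs. vzero (dual_space absK V))"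
  shows "coboundary G (dual_space absK V) k (mean_contraction G V m k f) = f"
proof (intro ext)
  fix xs :: "'g list" and v
  let ?del = "\<lambda>i. take i xs @ drop (Suc i) xs"
  show "coboundary G (dual_space absK V) k (mean_contraction G V m k f) xs v = f xs v"
  proof (cases "xs \<in> gtuples G (Suc k)")
    case False
    then show ?thesis
      using f by (simp add: coboundary_def bcochains_def)
  next
    case xs: True
    show ?thesis
    proof (cases "v \<in> vcarrier V")
      case False
      then show ?thesis
        using bounded_functional_outside[OF cochain_value[OF xs]]
        by (simp add: coboundary_dual_space_apply[OF xs] mean_contraction_def)
    next
      case v: True
      have slices: "\<And>i. i < k + 2 \<Longrightarrow> slice G f (?del i) v \<in> Cb absK G"
        using slice_Cb[OF gtuples_delete[OF xs] v] by simp
      have "coboundary G (dual_space absK V) k (mean_contraction G V m k f) xs v =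
          (\<Sum>i<k + 2. (- 1) ^ i * m (slice G f (?del i) v))"
        using gtuples_delete[OF xs] v
        by (simp add: coboundary_dual_space_apply[OF xs] mean_contraction_def)
      also have "\<dots> = (\<Sum>i<k + 2. m (\<lambda>x. (- 1) ^ i * slice G f (?del i) v x))"
        using mean_scale[OF mean slices] by simp
      also have "\<dots> = m (\<lambda>x. \<Sum>i<k + 2. (- 1) ^ i * slice G f (?del i) v x)"
        by (rule mean_sum[OF mean, symmetric]) (use Cb_scale[OF slices] in auto)
      also have "(\<lambda>x. \<Sum>i<k + 2. (- 1) ^ i * slice G f (?del i) v x) =
          (\<lambda>x. if x \<in> carrier G then f xs v else 0)"
        using cocycle_cone_identity[OF cocycle xs] by (auto simp: slice_def)
      finally show ?thesis
        using mean_const[OF mean] by simp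
    qed
  qed
qed

lemma mean_contraction_inv_bcochains:
  assumes minv: "\<forall>g\<in>carrier G. \<forall>\<phi>\<in>Cb absK G. m (left_translate G g \<phi>) = m \<phi>"
    and finv: "f \<in> inv_bcochains G (dual_space absK V) (dual_act G V actV) (Suc k)"
  shows "mean_contraction G V m k f \<in> inv_bcochains G (dual_space absK V) (dual_act G V actV) k"
  unfolding inv_bcochains_def
proof (intro CollectI conjI ballI mean_contraction_bcochains)
  fix g ys assume g: "g \<in> carrier G" and ys: "ys \<in> gtuples G k"
  let ?ys' = "map (\<lambda>x. inv g \<otimes> x) ys"
  have ys': "?ys' \<in> gtuples G k"
    by (rule gtuples_translate[OF g ys])
  have "mean_contraction G V m k f ?ys' (actV (inv g) v) = mean_contraction G V m k f ys v"
    if v: "v \<in> vcarrier V" for v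
  proof -
    have "slice G f ?ys' (actV (inv g) v) = left_translate G (inv g) (slice G f ys v)"
    proof
      fix x
      have "f ((g \<otimes> x) # ys) v = f (x # ?ys') (actV (inv g) v)" if x: "x \<in> carrier G"
      proof -
        have "dual_act G V actV g (f (map (\<lambda>y. inv g \<otimes> y) ((g \<otimes> x) # ys))) = f ((g \<otimes> x) # ys)"
          using finv g gtuples_Cons[OF m_closed[OF g x] ys] unfolding inv_bcochains_def by blast
        moreover have "map (\<lambda>y. inv g \<otimes> y) ((g \<otimes> x) # ys) = x # ?ys'"
          using g x by (simp add: m_assoc[symmetric])
        ultimately have "f ((g \<otimes> x) # ys) = dual_act G V actV g (f (x # ?ys'))"
          by simp
        then show ?thesis
          using v by (simp add: dual_act_def)
      qed
      then show "slice G f ?ys' (actV (inv g) v) x = left_translate G (inv g) (slice G f ys v) x"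
        using g by (simp add: slice_def left_translate_def)
    qed
    then show ?thesis
      using v ys ys' minv g slice_Cb[OF ys v] normed_module_act_closed[OF V]
      by (simp add: mean_contraction_def)
  qed
  then show "dual_act G V actV g (mean_contraction G V m k f ?ys') = mean_contraction G V m k f ys"
    using ys by (auto simp: dual_act_def fun_eq_iff mean_contraction_def)
qed

end

lemma Hb_vanishes_dual_if_amenable:
  assumes amenable: "normed_amenable absK G" and V: "normed_module absK G V actV" and n: "n \<ge> 1"
  shows "Hb_vanishes G (dual_space absK V) (dual_act G V actV) n"
proof -
  obtain m where mean: "normed_mean absK G m"
    and minv: "\<forall>g\<in>carrier G. \<forall>\<phi>\<in>Cb absK G. m (left_translate G g \<phi>) = m \<phi>"
    using amenable by (auto simp: normed_amenable_def)
  obtain k where k: "n = Suc k"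
    using n by (cases n) auto
  show ?thesis
    unfolding Hb_vanishes_def k diff_Suc_1
  proof (intro ballI impI bexI)
    fix f assume "f \<in> inv_bcochains G (dual_space absK V) (dual_act G V actV) (Suc k)"
      and "coboundary G (dual_space absK V) (Suc k) f = (\<lambda>xs. vzero (dual_space absK V))"
    then show "coboundary G (dual_space absK V) k (mean_contraction G V m k f) = f"
      and "mean_contraction G V m k f \<in> inv_bcochains G (dual_space absK V) (dual_act G V actV) k"
      using coboundary_mean_contraction[OF V mean] mean_contraction_inv_bcochains[OF V mean _ minv]
      by (auto simp: inv_bcochains_def)
  qed
qed

lemma Hb_vanishes_if_amenable:
  assumes "normed_amenable absK G" and "dual_module_of absK G E actE V actV" and "n \<ge> 1"
  shows "Hb_vanishes G E actE n"
proof -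
  obtain T where E: "normed_module absK G E actE" and V: "normed_module absK G V actV"
    and T: "iso_G_isometric absK G E actE (dual_space absK V) (dual_act G V actV) T"
    using assms(2) by (auto simp: dual_module_of_def)
  show ?thesis
    using Hb_vanishes_iso[OF T E normed_module_dual[OF V]]
      Hb_vanishes_dual_if_amenable[OF assms(1) V assms(3)]
    by blast
qed

end

section \<open>Bounded functions modulo constants\<close>

definition shift_class :: "('g, 'b) monoid_scheme \<Rightarrow> ('g \<Rightarrow> 'k::field) \<Rightarrow> ('g \<Rightarrow> 'k) set"
  where "shift_class G f = {h. \<exists>c. \<forall>x\<in>carrier G. h x = f x + c}"

definition class_rep :: "('g \<Rightarrow> 'k) set \<Rightarrow> 'g \<Rightarrow> 'k"
  where "class_rep A = (SOME f. f \<in> A)"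

definition oscillation :: "('k::field \<Rightarrow> real) \<Rightarrow> ('g, 'b) monoid_scheme \<Rightarrow> ('g \<Rightarrow> 'k) \<Rightarrow> real"
  where "oscillation absK G f = Sup ((\<lambda>(x, y). absK (f y - f x)) ` (carrier G \<times> carrier G))"

text \<open>The space \<open>\<ell>\<^sup>\<infinity>(G)/\<bbbK>\<close>. For an ultrametric absolute value its quotient norm
  \<open>inf\<^sub>c \<parallel>f + c\<parallel>\<^sub>\<infinity>\<close> coincides with the oscillation of \<open>f\<close>, which is what we use as the norm.\<close>

definition bounded_mod_constants ::
  "('k::field \<Rightarrow> real) \<Rightarrow> ('g, 'b) monoid_scheme \<Rightarrow> ('k, ('g \<Rightarrow> 'k) set) nspace"
  where "bounded_mod_constants absK G =
    \<lparr>vcarrier = shift_class G ` Cb absK G,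
     vzero = shift_class G (\<lambda>x. 0),
     vplus = (\<lambda>A B. shift_class G (\<lambda>x. class_rep A x + class_rep B x)),
     vscale = (\<lambda>a A. shift_class G (\<lambda>x. a * class_rep A x)),
     vnorm = (\<lambda>A. oscillation absK G (class_rep A))\<rparr>"

definition translate_class :: "('g, 'b) monoid_scheme \<Rightarrow> 'g \<Rightarrow> ('g \<Rightarrow> 'k::field) set \<Rightarrow> ('g \<Rightarrow> 'k) set"
  where "translate_class G g A = shift_class G (left_translate G g (class_rep A))"

lemma shift_class_self: "f \<in> shift_class G f"
  by (auto simp: shift_class_def intro: exI[of _ 0])

lemma shift_class_eqI:
  assumes "\<And>x. x \<in> carrier G \<Longrightarrow> h x = f x + c"
  shows "shift_class G h = shift_class G f"
proof -
  have "(\<exists>d. \<forall>x\<in>carrier G. k x = h x + d) \<longleftrightarrow> (\<exists>d. \<forall>x\<in>carrier G. k x = f x + d)" for k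
  proof
    assume "\<exists>d. \<forall>x\<in>carrier G. k x = h x + d"
    then obtain d where "\<forall>x\<in>carrier G. k x = h x + d" ..
    then show "\<exists>d. \<forall>x\<in>carrier G. k x = f x + d"
      using assms by (intro exI[of _ "c + d"]) (simp add: add.assoc)
  next
    assume "\<exists>d. \<forall>x\<in>carrier G. k x = f x + d"
    then obtain d where "\<forall>x\<in>carrier G. k x = f x + d" ..
    then show "\<exists>d. \<forall>x\<in>carrier G. k x = h x + d"
      using assms by (intro exI[of _ "d - c"]) (simp add: algebra_simps)
  qed
  then show ?thesis
    by (simp add: shift_class_def)
qed

lemma class_rep_shift_class: "\<exists>c. \<forall>x\<in>carrier G. class_rep (shift_class G f) x = f x + c"
proof -
  have "class_rep (shift_class G f) \<in> shift_class G f"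
    unfolding class_rep_def by (rule someI[of "\<lambda>h. h \<in> shift_class G f"]) (rule shift_class_self)
  then show ?thesis
    by (simp add: shift_class_def)
qed

lemma class_rep_diff:
  "x \<in> carrier G \<Longrightarrow> y \<in> carrier G \<Longrightarrow>
    class_rep (shift_class G f) y - class_rep (shift_class G f) x = f y - f x"
  using class_rep_shift_class[of G f] by auto

lemma bounded_mod_constants_carrier:
  "vcarrier (bounded_mod_constants absK G) = shift_class G ` Cb absK G"
  by (simp add: bounded_mod_constants_def)

lemma shift_class_in_bounded_mod_constants:
  "f \<in> Cb absK G \<Longrightarrow> shift_class G f \<in> vcarrier (bounded_mod_constants absK G)"
  by (simp add: bounded_mod_constants_carrier)

lemma bounded_mod_constants_zero: "vzero (bounded_mod_constants absK G) = shift_class G (\<lambda>x. 0)"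
  by (simp add: bounded_mod_constants_def)

lemma bounded_mod_constants_add:
  "vplus (bounded_mod_constants absK G) (shift_class G f) (shift_class G h) =
    shift_class G (\<lambda>x. f x + h x)"
proof -
  obtain c d where "\<forall>x\<in>carrier G. class_rep (shift_class G f) x = f x + c"
    "\<forall>x\<in>carrier G. class_rep (shift_class G h) x = h x + d"
    using class_rep_shift_class by metis
  then show ?thesis
    unfolding bounded_mod_constants_def by (simp, intro shift_class_eqI[of _ _ _ "c + d"]) simp
qed

lemma bounded_mod_constants_scale:
  "vscale (bounded_mod_constants absK G) a (shift_class G f) = shift_class G (\<lambda>x. a * f x)"
proof -
  obtain c where "\<forall>x\<in>carrier G. class_rep (shift_class G f) x = f x + c"
    using class_rep_shift_class by metis
  then show ?thesis
    unfolding bounded_mod_constants_def by (simp, intro shift_class_eqI[of _ _ _ "a * c"])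
      (simp add: distrib_left)
qed

lemma oscillation_shift:
  "(\<And>x. x \<in> carrier G \<Longrightarrow> h x = f x + c) \<Longrightarrow> oscillation absK G h = oscillation absK G f"
  unfolding oscillation_def by (rule arg_cong[where f = Sup], rule image_cong) auto

lemma bounded_mod_constants_norm:
  "vnorm (bounded_mod_constants absK G) (shift_class G f) = oscillation absK G f"
  using class_rep_shift_class[of G f] oscillation_shift
  by (fastforce simp: bounded_mod_constants_def)

context nonarch_group
begin

lemma translate_class_shift_class:
  assumes g: "g \<in> carrier G"
  shows "translate_class G g (shift_class G f) = shift_class G (left_translate G g f)"
proof -
  obtain c where "\<forall>x\<in>carrier G. class_rep (shift_class G f) x = f x + c"
    using class_rep_shift_class by metis
  then show ?thesis
    unfolding translate_class_def using g
    by (intro shift_class_eqI[of _ _ _ c]) (simp add: left_translate_def)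
qed

lemma left_translate_one: "left_translate G \<one> f x = (if x \<in> carrier G then f x else 0)"
  by (simp add: left_translate_def)

lemma left_translate_mult:
  "g \<in> carrier G \<Longrightarrow> h \<in> carrier G \<Longrightarrow>
    left_translate G (g \<otimes> h) f = left_translate G g (left_translate G h f)"
  by (auto simp: left_translate_def fun_eq_iff inv_mult_group m_assoc)

lemma abs_diff_le_oscillation:
  assumes f: "f \<in> Cb absK G" and x: "x \<in> carrier G" and y: "y \<in> carrier G"
  shows "absK (f y - f x) \<le> oscillation absK G f"
proof -
  obtain C where C: "\<forall>x\<in>carrier G. absK (f x) \<le> C"
    using f by (auto simp: Cb_def)
  have "absK (f y' - f x') \<le> C" if "x' \<in> carrier G" "y' \<in> carrier G" for x' y'
  proof -
    have "max (absK (f y')) (absK (f x')) \<le> C"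
      using C that by simp
    then show ?thesis
      using absK_diff_le order_trans by blast
  qed
  then show ?thesis
    unfolding oscillation_def by (intro cSup_upper bdd_aboveI[of _ C]) (use x y in auto)
qed

lemma oscillation_le:
  "(\<And>x y. x \<in> carrier G \<Longrightarrow> y \<in> carrier G \<Longrightarrow> absK (f y - f x) \<le> B) \<Longrightarrow> oscillation absK G f \<le> B"
  unfolding oscillation_def by (rule cSup_least) auto

lemma oscillation_nonneg: "f \<in> Cb absK G \<Longrightarrow> oscillation absK G f \<ge> 0"
  using abs_diff_le_oscillation[of f \<one> \<one>] absK_nonneg[of 0] by simp

lemma oscillation_le_sup_norm:
  assumes f: "f \<in> Cb absK G"
  shows "oscillation absK G f \<le> sup_norm absK G f"
proof (rule oscillation_le)
  fix x y assume "x \<in> carrier G" "y \<in> carrier G"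
  then have "max (absK (f y)) (absK (f x)) \<le> sup_norm absK G f"
    using abs_le_sup_norm[OF f] by simp
  then show "absK (f y - f x) \<le> sup_norm absK G f"
    using absK_diff_le order_trans by blast
qed

lemma oscillation_eq_0_iff:
  assumes f: "f \<in> Cb absK G"
  shows "oscillation absK G f = 0 \<longleftrightarrow> (\<forall>x\<in>carrier G. f x = f \<one>)"
proof
  assume osc: "oscillation absK G f = 0"
  show "\<forall>x\<in>carrier G. f x = f \<one>"
  proof
    fix x assume "x \<in> carrier G"
    then have "absK (f x - f \<one>) \<le> 0"
      using abs_diff_le_oscillation[OF f one_closed] osc by simp
    then show "f x = f \<one>"
      using absK_nonneg[of "f x - f \<one>"] absK_eq_0_iff[of "f x - f \<one>"] by simp
  qed
next
  assume const: "\<forall>x\<in>carrier G. f x = f \<one>"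
  have "oscillation absK G f \<le> 0"
  proof (rule oscillation_le)
    fix x y assume "x \<in> carrier G" "y \<in> carrier G"
    then have "f y - f x = 0"
      using const by (metis diff_self)
    then show "absK (f y - f x) \<le> 0"
      by simp
  qed
  then show "oscillation absK G f = 0"
    using oscillation_nonneg[OF f] by simp
qed

lemma oscillation_add_le:
  assumes "f \<in> Cb absK G" "h \<in> Cb absK G"
  shows "oscillation absK G (\<lambda>x. f x + h x) \<le> max (oscillation absK G f) (oscillation absK G h)"
proof (rule oscillation_le)
  fix x y assume "x \<in> carrier G" "y \<in> carrier G"
  then have "max (absK (f y - f x)) (absK (h y - h x)) \<le>
      max (oscillation absK G f) (oscillation absK G h)"
    using abs_diff_le_oscillation assms by (simp add: max.coboundedI1 max.coboundedI2)
  then have "absK ((f y - f x) + (h y - h x)) \<le> max (oscillation absK G f) (oscillation absK G h)"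
    using absK_add_le order_trans by blast
  then show "absK (f y + h y - (f x + h x)) \<le> max (oscillation absK G f) (oscillation absK G h)"
    by (simp add: algebra_simps)
qed

lemma oscillation_scale_le:
  assumes "f \<in> Cb absK G"
  shows "oscillation absK G (\<lambda>x. a * f x) \<le> absK a * oscillation absK G f"
proof (rule oscillation_le)
  fix x y assume "x \<in> carrier G" "y \<in> carrier G"
  then show "absK (a * f y - a * f x) \<le> absK a * oscillation absK G f"
    using abs_diff_le_oscillation[OF assms] absK_nonneg[of a]
    by (simp flip: right_diff_distrib add: absK_mult mult_left_mono)
qed

lemma oscillation_left_translate:
  assumes g: "g \<in> carrier G" and f: "f \<in> Cb absK G"
  shows "oscillation absK G (left_translate G g f) = oscillation absK G f"
proof (rule antisym)
  show "oscillation absK G (left_translate G g f) \<le> oscillation absK G f"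
    using g abs_diff_le_oscillation[OF f] by (intro oscillation_le) (simp add: left_translate_def)
  have "absK (f y - f x) \<le> oscillation absK G (left_translate G g f)"
    if "x \<in> carrier G" "y \<in> carrier G" for x y
    using abs_diff_le_oscillation[OF Cb_left_translate[OF g f], of "g \<otimes> x" "g \<otimes> y"] g that
    by (simp add: left_translate_def m_assoc[symmetric])
  then show "oscillation absK G f \<le> oscillation absK G (left_translate G g f)"
    by (rule oscillation_le)
qed

end

context nonarch_group
begin

lemma shift_class_eq_zero_iff:
  "shift_class G f = shift_class G (\<lambda>x. 0) \<longleftrightarrow> (\<forall>x\<in>carrier G. f x = f \<one>)"
proof
  assume "shift_class G f = shift_class G (\<lambda>x. 0)"
  then obtain c where "\<forall>x\<in>carrier G. f x = c"
    using shift_class_self[of f G] by (auto simp: shift_class_def)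
  then show "\<forall>x\<in>carrier G. f x = f \<one>"
    by simp
next
  assume const: "\<forall>x\<in>carrier G. f x = f \<one>"
  show "shift_class G f = shift_class G (\<lambda>x. 0)"
    using const by (intro shift_class_eqI[of _ _ _ "f \<one>"]) (metis add_0)
qed

lemma kvs_bounded_mod_constants: "kvs (bounded_mod_constants absK G)"
proof -
  have neg: "\<exists>h\<in>Cb absK G. shift_class G (\<lambda>x. f x + h x) = shift_class G (\<lambda>x. 0)"
    if f: "f \<in> Cb absK G" for f
    using Cb_scale[OF f, of "- 1"] by (intro bexI[of _ "\<lambda>x. - f x"]) auto
  show ?thesis
    unfolding kvs_def bounded_mod_constants_carrier
    by (auto simp: bounded_mod_constants_zero bounded_mod_constants_add bounded_mod_constants_scale
        Cb_zero Cb_add Cb_scale neg algebra_simps)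
qed

lemma normed_kvs_bounded_mod_constants: "normed_kvs absK (bounded_mod_constants absK G)"
proof -
  let ?Q = "bounded_mod_constants absK G"
  have homogeneous: "vnorm ?Q (vscale ?Q a A) = absK a * vnorm ?Q A" if "A \<in> vcarrier ?Q" for a A
  proof (rule homogeneous_if_subhomogeneous[where S = "vcarrier ?Q"])
    fix a and A assume "A \<in> vcarrier ?Q"
    then obtain f where "f \<in> Cb absK G" "A = shift_class G f"
      by (auto simp: bounded_mod_constants_carrier)
    then show "vscale ?Q a A \<in> vcarrier ?Q" and "vnorm ?Q (vscale ?Q a A) \<le> absK a * vnorm ?Q A"
      and "0 \<le> vnorm ?Q A" and "a \<noteq> 0 \<Longrightarrow> vscale ?Q (inverse a) (vscale ?Q a A) = A"
      by (auto simp: bounded_mod_constants_carrier bounded_mod_constants_scale bounded_mod_constants_norm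
          Cb_scale oscillation_scale_le oscillation_nonneg mult.assoc[symmetric])
  qed (fact that)
  show ?thesis
    unfolding normed_kvs_def
    using kvs_bounded_mod_constants homogeneous
    by (auto simp: bounded_mod_constants_carrier bounded_mod_constants_zero bounded_mod_constants_add
        bounded_mod_constants_norm oscillation_nonneg oscillation_eq_0_iff shift_class_eq_zero_iff
        oscillation_add_le)
qed

lemma normed_module_bounded_mod_constants:
  "normed_module absK G (bounded_mod_constants absK G) (translate_class G)"
proof -
  have "shift_class G (left_translate G \<one> f) = shift_class G f" for f :: "'g \<Rightarrow> 'k"
    by (rule shift_class_eqI[of _ _ _ 0]) (simp add: left_translate_one)
  moreover have
    "left_translate G g (\<lambda>x. f x + h x) = (\<lambda>x. left_translate G g f x + left_translate G g h x)"
    and "left_translate G g (\<lambda>x. a * f x) = (\<lambda>x. a * left_translate G g f x)" for g f h and a :: 'k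
    by (auto simp: left_translate_def)
  ultimately show ?thesis
    unfolding normed_module_def bounded_mod_constants_carrier
    by (auto simp: normed_kvs_bounded_mod_constants translate_class_shift_class Cb_left_translate
        bounded_mod_constants_add bounded_mod_constants_scale bounded_mod_constants_norm
        oscillation_left_translate left_translate_mult Cb_add Cb_scale)
qed

end

section \<open>Groups with vanishing bounded cohomology are amenable\<close>

definition increment_cocycle ::
  "('k::field \<Rightarrow> real) \<Rightarrow> ('g, 'b) monoid_scheme \<Rightarrow> 'g list \<Rightarrow> ('g \<Rightarrow> 'k) set \<Rightarrow> 'k"
  where "increment_cocycle absK G xs = (\<lambda>A.
    if xs \<in> gtuples G 1 \<and> A \<in> vcarrier (bounded_mod_constants absK G)
    then class_rep A (xs ! 1) - class_rep A (xs ! 0) else 0)"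

definition mean_of_primitive ::
  "('g, 'b) monoid_scheme \<Rightarrow> ('g list \<Rightarrow> ('g \<Rightarrow> 'k) set \<Rightarrow> 'k) \<Rightarrow> ('g \<Rightarrow> 'k::field) \<Rightarrow> 'k"
  where "mean_of_primitive G h f = f \<one>\<^bsub>G\<^esub> - h [\<one>\<^bsub>G\<^esub>] (shift_class G f)"

lemma dual_module_of_dual_space:
  assumes "normed_module absK G (dual_space absK V) (dual_act G V act)" "normed_module absK G V act"
  shows "dual_module_of absK G (dual_space absK V) (dual_act G V act) V act"
  using assms by (auto simp: dual_module_of_def iso_G_isometric_def intro!: exI[of _ id])

context nonarch_group
begin

lemma increment_cocycle_shift_class:
  "f \<in> Cb absK G \<Longrightarrow> x \<in> carrier G \<Longrightarrow> y \<in> carrier G \<Longrightarrow>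
    increment_cocycle absK G [x, y] (shift_class G f) = f y - f x"
  by (simp add: increment_cocycle_def gtuples_def bounded_mod_constants_carrier class_rep_diff)

lemma increment_cocycle_bounded_functional:
  assumes xs: "xs \<in> gtuples G 1"
  shows "increment_cocycle absK G xs \<in> bounded_functionals absK (bounded_mod_constants absK G)"
    and "op_norm absK (bounded_mod_constants absK G) (increment_cocycle absK G xs) \<le> 1"
proof -
  obtain x y where xy: "xs = [x, y]" "x \<in> carrier G" "y \<in> carrier G"
    using xs by (auto simp: gtuples_def length_Suc_conv)
  have bound: "absK (increment_cocycle absK G xs A) \<le> 1 * vnorm (bounded_mod_constants absK G) A"
    if "A \<in> vcarrier (bounded_mod_constants absK G)" for A
    using that xy abs_diff_le_oscillation
    by (auto simp: bounded_mod_constants_carrier increment_cocycle_shift_class bounded_mod_constants_norm)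
  show "increment_cocycle absK G xs \<in> bounded_functionals absK (bounded_mod_constants absK G)"
  proof (rule bounded_functionalI[OF _ _ _ bound])
    fix A B
    assume "A \<in> vcarrier (bounded_mod_constants absK G)" "B \<in> vcarrier (bounded_mod_constants absK G)"
    then obtain f h where "f \<in> Cb absK G" "h \<in> Cb absK G" "A = shift_class G f" "B = shift_class G h"
      by (auto simp: bounded_mod_constants_carrier)
    then show "increment_cocycle absK G xs (vplus (bounded_mod_constants absK G) A B) =
        increment_cocycle absK G xs A + increment_cocycle absK G xs B"
      using xy by (simp add: bounded_mod_constants_add increment_cocycle_shift_class Cb_add)
  next
    fix a A assume "A \<in> vcarrier (bounded_mod_constants absK G)"
    then obtain f where "f \<in> Cb absK G" "A = shift_class G f"
      by (auto simp: bounded_mod_constants_carrier)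
    then show "increment_cocycle absK G xs (vscale (bounded_mod_constants absK G) a A) =
        a * increment_cocycle absK G xs A"
      using xy by (simp add: bounded_mod_constants_scale increment_cocycle_shift_class Cb_scale
          right_diff_distrib)
  qed (simp_all add: increment_cocycle_def)
  show "op_norm absK (bounded_mod_constants absK G) (increment_cocycle absK G xs) \<le> 1"
    using bound by (intro op_norm_le) auto
qed

lemma increment_cocycle_inv_bcochains:
  "increment_cocycle absK G \<in> inv_bcochains G (dual_space absK (bounded_mod_constants absK G))
    (dual_act G (bounded_mod_constants absK G) (translate_class G)) 1"
  unfolding inv_bcochains_def bcochains_def
proof (intro CollectI conjI ballI allI impI exI)
  fix xs :: "'g list"
  show "xs \<in> gtuples G 1 \<Longrightarrow>
      increment_cocycle absK G xs \<in> vcarrier (dual_space absK (bounded_mod_constants absK G))"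
    and "xs \<in> gtuples G 1 \<Longrightarrow>
      vnorm (dual_space absK (bounded_mod_constants absK G)) (increment_cocycle absK G xs) \<le> 1"
    and "xs \<notin> gtuples G 1 \<Longrightarrow>
      increment_cocycle absK G xs = vzero (dual_space absK (bounded_mod_constants absK G))"
    by (simp_all add: increment_cocycle_bounded_functional) (simp add: increment_cocycle_def fun_eq_iff)
next
  fix g and xs :: "'g list" assume g: "g \<in> carrier G" and "xs \<in> gtuples G 1"
  then obtain x y where xy: "xs = [x, y]" "x \<in> carrier G" "y \<in> carrier G"
    by (auto simp: gtuples_def length_Suc_conv)
  have "dual_act G (bounded_mod_constants absK G) (translate_class G) g
      (increment_cocycle absK G [inv g \<otimes> x, inv g \<otimes> y]) A = increment_cocycle absK G [x, y] A" for A
  proof (cases "A \<in> vcarrier (bounded_mod_constants absK G)")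
    case True
    then obtain f where f: "f \<in> Cb absK G" and A: "A = shift_class G f"
      by (auto simp: bounded_mod_constants_carrier)
    have "dual_act G (bounded_mod_constants absK G) (translate_class G) g
        (increment_cocycle absK G [inv g \<otimes> x, inv g \<otimes> y]) A =
        increment_cocycle absK G [inv g \<otimes> x, inv g \<otimes> y] (shift_class G (left_translate G (inv g) f))"
      using True A g by (simp add: dual_act_def translate_class_shift_class)
    also have "\<dots> = left_translate G (inv g) f (inv g \<otimes> y) - left_translate G (inv g) f (inv g \<otimes> x)"
      using g xy by (simp add: increment_cocycle_shift_class Cb_left_translate f)
    also have "\<dots> = increment_cocycle absK G [x, y] A"
      using g xy f A by (simp add: increment_cocycle_shift_class left_translate_def m_assoc[symmetric])
    finally show ?thesis .
  qed (simp add: dual_act_def increment_cocycle_def)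
  then show "dual_act G (bounded_mod_constants absK G) (translate_class G) g
      (increment_cocycle absK G (map (\<lambda>x. inv g \<otimes> x) xs)) = increment_cocycle absK G xs"
    using xy by (simp add: fun_eq_iff)
qed

lemma coboundary_increment_cocycle:
  "coboundary G (dual_space absK (bounded_mod_constants absK G)) 1 (increment_cocycle absK G) =
    (\<lambda>xs. vzero (dual_space absK (bounded_mod_constants absK G)))"
proof (intro ext)
  fix xs :: "'g list" and A
  show "coboundary G (dual_space absK (bounded_mod_constants absK G)) 1 (increment_cocycle absK G) xs A =
      vzero (dual_space absK (bounded_mod_constants absK G)) A"
  proof (cases "xs \<in> gtuples G (Suc 1)")
    case False
    then show ?thesis
      by (simp add: coboundary_def)
  next
    case True
    then obtain x y z where xyz: "xs = [x, y, z]" "x \<in> carrier G" "y \<in> carrier G" "z \<in> carrier G"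
      by (auto simp: gtuples_def length_Suc_conv)
    have "coboundary G (dual_space absK (bounded_mod_constants absK G)) 1 (increment_cocycle absK G) xs A =
        increment_cocycle absK G [y, z] A - increment_cocycle absK G [x, z] A + increment_cocycle absK G [x, y] A"
      unfolding coboundary_dual_space_apply[OF True] by (simp add: xyz numeral_3_eq_3)
    then show ?thesis
      using xyz by (simp add: increment_cocycle_def gtuples_def)
  qed
qed

end

context nonarch_group
begin

context
  fixes h
  assumes h_inv: "h \<in> inv_bcochains G (dual_space absK (bounded_mod_constants absK G))
      (dual_act G (bounded_mod_constants absK G) (translate_class G)) 0"
    and h_primitive:
      "coboundary G (dual_space absK (bounded_mod_constants absK G)) 0 h = increment_cocycle absK G"
begin

lemma primitive_value:
  "x \<in> carrier G \<Longrightarrow> h [x] \<in> bounded_functionals absK (bounded_mod_constants absK G)"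
  using h_inv by (simp add: inv_bcochains_def bcochains_def gtuples_def)

lemma primitive_increment:
  assumes f: "f \<in> Cb absK G" and x: "x \<in> carrier G" and y: "y \<in> carrier G"
  shows "h [y] (shift_class G f) - h [x] (shift_class G f) = f y - f x"
proof -
  have "[x, y] \<in> gtuples G (Suc 0)"
    using x y by (simp add: gtuples_def)
  from coboundary_dual_space_apply[OF this] have
    "coboundary G (dual_space absK (bounded_mod_constants absK G)) 0 h [x, y] (shift_class G f) =
      h [y] (shift_class G f) - h [x] (shift_class G f)"
    by simp
  then show ?thesis
    using h_primitive increment_cocycle_shift_class[OF f x y] by simp
qed

lemma primitive_left_translate:
  assumes g: "g \<in> carrier G" and f: "f \<in> Cb absK G"
  shows "h [\<one>] (shift_class G (left_translate G g f)) = h [inv g] (shift_class G f)"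
proof -
  have "\<forall>g\<in>carrier G. \<forall>xs\<in>gtuples G 0.
      dual_act G (bounded_mod_constants absK G) (translate_class G) g (h (map (\<lambda>x. inv g \<otimes> x) xs)) = h xs"
    using h_inv by (simp add: inv_bcochains_def)
  from this[rule_format, OF g, of "[\<one>]"]
  have act: "dual_act G (bounded_mod_constants absK G) (translate_class G) g (h [inv g]) = h [\<one>]"
    using g by (simp add: gtuples_def)
  have "h [\<one>] (shift_class G (left_translate G g f)) =
      h [inv g] (translate_class G (inv g) (shift_class G (left_translate G g f)))"
    using shift_class_in_bounded_mod_constants[OF Cb_left_translate[OF g f]]
    by (simp flip: act add: dual_act_def)
  also have "translate_class G (inv g) (shift_class G (left_translate G g f)) = shift_class G f"
    using g f by (simp add: translate_class_shift_class Cb_left_translate flip: left_translate_mult)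
      (rule shift_class_eqI[of _ _ _ 0], simp add: left_translate_one)
  finally show ?thesis .
qed

lemma mean_of_primitive_bounded:
  "\<exists>C\<ge>0. \<forall>f\<in>Cb absK G. absK (mean_of_primitive G h f) \<le> C * sup_norm absK G f"
proof -
  obtain C where C: "C \<ge> 0"
    "\<forall>A\<in>vcarrier (bounded_mod_constants absK G).
      absK (h [\<one>] A) \<le> C * vnorm (bounded_mod_constants absK G) A"
    using bounded_functional_bounded[OF primitive_value[OF one_closed]] by blast
  have "absK (mean_of_primitive G h f) \<le> max 1 C * sup_norm absK G f" if f: "f \<in> Cb absK G" for f
  proof -
    have "absK (h [\<one>] (shift_class G f)) \<le> C * oscillation absK G f"
      using C(2)[rule_format, OF shift_class_in_bounded_mod_constants[OF f]]
      by (simp add: bounded_mod_constants_norm)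
    also have "\<dots> \<le> C * sup_norm absK G f"
      by (rule mult_left_mono[OF oscillation_le_sup_norm[OF f] C(1)])
    finally have "max (absK (f \<one>)) (absK (h [\<one>] (shift_class G f))) \<le> max 1 C * sup_norm absK G f"
      using abs_le_sup_norm[OF f one_closed] sup_norm_nonneg[OF f]
      by (auto simp: max_mult_distrib_right intro: le_max_iff_disj[THEN iffD2])
    then show ?thesis
      unfolding mean_of_primitive_def using absK_diff_le order_trans by blast
  qed
  then show ?thesis
    by (intro exI[of _ "max 1 C"]) auto
qed

lemma normed_mean_of_primitive: "normed_mean absK G (mean_of_primitive G h)"
proof -
  note h1 = primitive_value[OF one_closed] and in_Q = shift_class_in_bounded_mod_constants
  have "shift_class G (indicator_G G) = vzero (bounded_mod_constants absK G)"
    by (simp add: bounded_mod_constants_zero shift_class_eq_zero_iff indicator_G_def)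
  then have "mean_of_primitive G h (indicator_G G) = 1"
    using bounded_functional_vzero[OF kvs_bounded_mod_constants h1]
    by (simp add: mean_of_primitive_def) (simp add: indicator_G_def)
  then show ?thesis
    unfolding normed_mean_def
    using bounded_functional_add_apply[OF h1 in_Q in_Q] bounded_functional_scale_apply[OF h1 in_Q]
      mean_of_primitive_bounded
    by (simp add: mean_of_primitive_def bounded_mod_constants_add bounded_mod_constants_scale
        right_diff_distrib)
qed

lemma mean_of_primitive_left_translate:
  assumes g: "g \<in> carrier G" and f: "f \<in> Cb absK G"
  shows "mean_of_primitive G h (left_translate G g f) = mean_of_primitive G h f"
proof -
  have "mean_of_primitive G h (left_translate G g f) = f (inv g) - h [inv g] (shift_class G f)"
    unfolding mean_of_primitive_def primitive_left_translate[OF g f]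
    using g by (simp add: left_translate_def)
  also have "\<dots> = f \<one> - h [\<one>] (shift_class G f)"
    using primitive_increment[OF f one_closed, of "inv g"] g by (simp add: algebra_simps)
  finally show ?thesis
    by (simp add: mean_of_primitive_def)
qed

end

lemma normed_amenable_if_Hb_vanishes:
  assumes "Hb_vanishes G (dual_space absK (bounded_mod_constants absK G))
    (dual_act G (bounded_mod_constants absK G) (translate_class G)) 1"
  shows "normed_amenable absK G"
proof -
  obtain h where "h \<in> inv_bcochains G (dual_space absK (bounded_mod_constants absK G))
      (dual_act G (bounded_mod_constants absK G) (translate_class G)) 0"
    and "coboundary G (dual_space absK (bounded_mod_constants absK G)) 0 h = increment_cocycle absK G"
    using assms increment_cocycle_inv_bcochains coboundary_increment_cocycle
    unfolding Hb_vanishes_def by fastforce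
  then show ?thesis
    using normed_mean_of_primitive mean_of_primitive_left_translate
    unfolding normed_amenable_def by blast
qed

end

theorem theorem1p4:
  fixes absK :: "'k::field \<Rightarrow> real"
    and G :: "('g, 'b) monoid_scheme"
  assumes "nonarch_abs absK"
    and "group G"
  shows "(normed_amenable absK G \<longrightarrow>
            (\<forall>(E :: ('k, 'e) nspace) actE (V :: ('k, 'v) nspace) actV n.
               dual_module_of absK G E actE V actV \<and> n \<ge> 1 \<longrightarrow> Hb_vanishes G E actE n))
       \<and> ((\<forall>(E :: ('k, ('g \<Rightarrow> 'k) set \<Rightarrow> 'k) nspace) actE (V :: ('k, ('g \<Rightarrow> 'k) set) nspace) actV n.
               dual_module_of absK G E actE V actV \<and> n \<ge> 1 \<longrightarrow> Hb_vanishes G E actE n)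
            \<longrightarrow> normed_amenable absK G)"
proof -
  interpret nonarch_group G absK
    using assms by (simp add: nonarch_group_def nonarch_absolute_value_def)
  have "dual_module_of absK G (dual_space absK (bounded_mod_constants absK G))
      (dual_act G (bounded_mod_constants absK G) (translate_class G))
      (bounded_mod_constants absK G) (translate_class G)"
    using normed_module_bounded_mod_constants
    by (intro dual_module_of_dual_space normed_module_dual)
  then show ?thesis
    using Hb_vanishes_if_amenable normed_amenable_if_Hb_vanishes by blast
qed

end
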